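(* Let $\mathfrak a$ be a commutative $n$-ary superalgebra, invariant with respect to an even non-degenerate skew-symmetric form, which is irreducible and not simple. Let $\mathfrak i$ be a maximal non-trivial ideal and $\mathfrak h$ an isotropic $n$-ary subalgebra of $\mathfrak a$ such that $\mathfrak a=\mathfrak i\oplus\mathfrak h$. Then $\mathfrak a$ is isomorphic to a certain generalized double extension (of some commutative invariant $n$-ary superalgebra $\mathfrak g$ by $\mathfrak h$ via some $\psi_1,\dots,\psi_{n+1}$) with $\psi_n=\psi_{n+1}=0$; such a generalized double extension is called a double extension.
   Context: $\mathbb K=\mathbb R$ or $\mathbb C$; spaces are finite-dimensional $\mathbb Z_2$-graded, $\bar a$ is parity. The form $(\,,)$ is even and skew-symmetric in the super sense, $(a,b)=-(-1)^{\bar a\bar b}(b,a)$. An $n$-ary superalgebra is a space with an $n$-linear map $\{\,\}$; commutative: $\{\dots,a_i,a_{i+1},\dots\}=(-1)^{\bar a_i\bar a_{i+1}}\{\dots,a_{i+1},a_i,\dots\}$; invariant: $(a_0,\{a_1,\dots,a_n\})=(-1)^{\bar a_0\bar a_1}(a_1,\{a_0,a_2,\dots,a_n\})$. Subalgebra: subspace $\mathfrak b$ with $\{\mathfrak b,\dots,\mathfrak b\}\subset\mathfrak b$. Ideal: subspace $\mathfrak i$ with $\{\mathfrak a,\dots,\mathfrak a,\mathfrak i\}\subset\mathfrak i$. Simple: not trivial one-dimensional and no proper ideals. Irreducible: not a direct sum of two ideals on which the form is non-degenerate. Derived potential: $S^*V$ (for $V$ with such a form) carries the Poisson bracket with $[x,y]=(x,y)$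 on $V$, $[v,w_1w_2]=[v,w_1]w_2+(-1)^{\bar v\bar w_1}w_1[v,w_2]$, $[v,w]=-(-1)^{\bar v\bar w}[w,v]$; for $\mu\in S^{n+1}V$, $\{a_1,\dots,a_n\}=[a_1,[\dots,[a_n,\mu]\dots]]$ is a commutative invariant $n$-ary superalgebra, and every such structure arises this way ($\mu$ = derived potential). Generalized double extension: given a commutative invariant $n$-ary superalgebra $\mathfrak g$ with derived potential $\mu\in S^{n+1}\mathfrak g$ and a commutative $n$-ary superalgebra $\mathfrak h$ with multiplication $\nu\in S^n\mathfrak h^*\otimes\mathfrak h\cong S^n\mathfrak h^*\cdot\mathfrak h\subset S^*(\mathfrak h\oplus\mathfrak h^* )$, where $\mathfrak h\oplus\mathfrak h^*$ has the form with $\mathfrak h,\mathfrak h^*$ isotropic, $(\alpha,x)=\alpha(x)$, $(x,\alpha)=-(-1)^{\bar\alpha\bar x}\alpha(x)$; on $\mathfrak d=\mathfrak g\oplus\mathfrak h\oplus\mathfrak h^*$ (orthogonal sum of forms) the commutative invariant $n$-ary superalgebra with derived potential $\mu+\nu+\sum_{i=1}^{n+1}\psi_i$, $\psi_i\in S^i\mathfrak h^*\cdot S^{n-i+1}\mathfrak g$, is the generalized double extension of $\mathfrak g$ by $\mathfrak h$ via the $\psi_i$. *)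

theory Defs
  imports Complex_Main "HOL-Library.Product_Plus" "HOL-Library.Function_Algebras"
begin

text \<open>A finite-dimensional Z2-graded space is given by its even part V0 and odd part V1
  inside an ambient module with scalar multiplication sc; the space itself is V0 + V1.
  Parity True means odd.\<close>

definition ssum :: "'a::ab_group_add set \<Rightarrow> 'a set \<Rightarrow> 'a set" where
  "ssum A B = {x + y | x y. x \<in> A \<and> y \<in> B}"

definition par_part :: "'a set \<Rightarrow> 'a set \<Rightarrow> bool \<Rightarrow> 'a set" where
  "par_part V0 V1 p = (if p then V1 else V0)"

definition psign :: "bool \<Rightarrow> bool \<Rightarrow> 'k::ring_1" where
  "psign p q = (if p \<and> q then - 1 else 1)"

definition superspace :: "('k::field \<Rightarrow> 'a::ab_group_add \<Rightarrow> 'a) \<Rightarrow> 'a set \<Rightarrow> 'a set \<Rightarrow> bool" where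
  "superspace sc V0 V1 \<longleftrightarrow> module.subspace sc V0 \<and> module.subspace sc V1 \<and> V0 \<inter> V1 = {0}
     \<and> (\<exists>B. finite B \<and> B \<subseteq> ssum V0 V1 \<and> ssum V0 V1 \<subseteq> module.span sc B)"

definition bilinear_on :: "('k::field \<Rightarrow> 'a::ab_group_add \<Rightarrow> 'a) \<Rightarrow> 'a set \<Rightarrow> ('a \<Rightarrow> 'a \<Rightarrow> 'k) \<Rightarrow> bool" where
  "bilinear_on sc V B \<longleftrightarrow> (\<forall>x\<in>V. \<forall>y\<in>V. \<forall>z\<in>V. \<forall>c.
      B (x + y) z = B x z + B y z \<and> B (sc c x) z = c * B x z \<and>
      B z (x + y) = B z x + B z y \<and> B z (sc c x) = c * B z x)"

definition nondeg_on :: "('a::zero \<Rightarrow> 'a \<Rightarrow> 'k::zero) \<Rightarrow> 'a set \<Rightarrow> bool" where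
  "nondeg_on B W \<longleftrightarrow> (\<forall>x\<in>W. (\<forall>y\<in>W. B x y = 0) \<longrightarrow> x = 0)"

definition super_form :: "('k::field \<Rightarrow> 'a::ab_group_add \<Rightarrow> 'a) \<Rightarrow> 'a set \<Rightarrow> 'a set \<Rightarrow> ('a \<Rightarrow> 'a \<Rightarrow> 'k) \<Rightarrow> bool" where
  "super_form sc V0 V1 B \<longleftrightarrow> bilinear_on sc (ssum V0 V1) B
     \<and> (\<forall>x\<in>V0. \<forall>y\<in>V1. B x y = 0 \<and> B y x = 0)
     \<and> (\<forall>p q. \<forall>x\<in>par_part V0 V1 p. \<forall>y\<in>par_part V0 V1 q. B x y = - (psign p q * B y x))
     \<and> nondeg_on B (ssum V0 V1)"

definition nary_on :: "('k::field \<Rightarrow> 'a::ab_group_add \<Rightarrow> 'a) \<Rightarrow> 'a set \<Rightarrow> nat \<Rightarrow> ('a list \<Rightarrow> 'a) \<Rightarrow> bool" where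
  "nary_on sc V n M \<longleftrightarrow>
     (\<forall>as. length as = n \<and> set as \<subseteq> V \<longrightarrow> M as \<in> V) \<and>
     (\<forall>as i x y c. length as = n \<and> set as \<subseteq> V \<and> i < n \<and> x \<in> V \<and> y \<in> V \<longrightarrow>
        M (as[i := x + y]) = M (as[i := x]) + M (as[i := y]) \<and>
        M (as[i := sc c x]) = sc c (M (as[i := x])))"

definition commutative_nary :: "('k::field \<Rightarrow> 'a::ab_group_add \<Rightarrow> 'a) \<Rightarrow> 'a set \<Rightarrow> 'a set \<Rightarrow> nat \<Rightarrow> ('a list \<Rightarrow> 'a) \<Rightarrow> bool" where
  "commutative_nary sc V0 V1 n M \<longleftrightarrow>
     (\<forall>as i p q x y. length as = n \<and> set as \<subseteq> ssum V0 V1 \<and> Suc i < n \<and>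
        x \<in> par_part V0 V1 p \<and> y \<in> par_part V0 V1 q \<longrightarrow>
        M (as[i := x, Suc i := y]) = sc (psign p q) (M (as[i := y, Suc i := x])))"

definition invariant_nary :: "'a set \<Rightarrow> 'a set \<Rightarrow> nat \<Rightarrow> ('a \<Rightarrow> 'a \<Rightarrow> 'k::ring_1) \<Rightarrow> ('a::ab_group_add list \<Rightarrow> 'a) \<Rightarrow> bool" where
  "invariant_nary V0 V1 n B M \<longleftrightarrow>
     (\<forall>a0 a1 rest p q. a0 \<in> par_part V0 V1 p \<and> a1 \<in> par_part V0 V1 q \<and>
        length rest = n - 1 \<and> set rest \<subseteq> ssum V0 V1 \<longrightarrow>
        B a0 (M (a1 # rest)) = psign p q * B a1 (M (a0 # rest)))"

definition comm_inv_superalg ::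
  "('k::field \<Rightarrow> 'a::ab_group_add \<Rightarrow> 'a) \<Rightarrow> 'a set \<Rightarrow> 'a set \<Rightarrow> nat \<Rightarrow> ('a \<Rightarrow> 'a \<Rightarrow> 'k) \<Rightarrow> ('a list \<Rightarrow> 'a) \<Rightarrow> bool" where
  "comm_inv_superalg sc V0 V1 n B M \<longleftrightarrow> superspace sc V0 V1 \<and> super_form sc V0 V1 B \<and>
     nary_on sc (ssum V0 V1) n M \<and> commutative_nary sc V0 V1 n M \<and> invariant_nary V0 V1 n B M"

definition graded_subspace :: "('k::field \<Rightarrow> 'a::ab_group_add \<Rightarrow> 'a) \<Rightarrow> 'a set \<Rightarrow> 'a set \<Rightarrow> 'a set \<Rightarrow> bool" where
  "graded_subspace sc V0 V1 W \<longleftrightarrow> module.subspace sc W \<and> W \<subseteq> ssum V0 V1 \<and>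
     W = ssum (W \<inter> V0) (W \<inter> V1)"

definition is_ideal :: "('k::field \<Rightarrow> 'a::ab_group_add \<Rightarrow> 'a) \<Rightarrow> 'a set \<Rightarrow> 'a set \<Rightarrow> nat \<Rightarrow> ('a list \<Rightarrow> 'a) \<Rightarrow> 'a set \<Rightarrow> bool" where
  "is_ideal sc V0 V1 n M I \<longleftrightarrow> graded_subspace sc V0 V1 I \<and>
     (\<forall>as. length as = n \<and> set (butlast as) \<subseteq> ssum V0 V1 \<and> last as \<in> I \<longrightarrow> M as \<in> I)"

definition is_subalgebra :: "('k::field \<Rightarrow> 'a::ab_group_add \<Rightarrow> 'a) \<Rightarrow> 'a set \<Rightarrow> 'a set \<Rightarrow> nat \<Rightarrow> ('a list \<Rightarrow> 'a) \<Rightarrow> 'a set \<Rightarrow> bool" where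
  "is_subalgebra sc V0 V1 n M W \<longleftrightarrow> graded_subspace sc V0 V1 W \<and>
     (\<forall>as. length as = n \<and> set as \<subseteq> W \<longrightarrow> M as \<in> W)"

definition isotropic :: "('a \<Rightarrow> 'a \<Rightarrow> 'k::zero) \<Rightarrow> 'a set \<Rightarrow> bool" where
  "isotropic B W \<longleftrightarrow> (\<forall>x\<in>W. \<forall>y\<in>W. B x y = 0)"

definition irreducible_alg ::
  "('k::field \<Rightarrow> 'a::ab_group_add \<Rightarrow> 'a) \<Rightarrow> 'a set \<Rightarrow> 'a set \<Rightarrow> nat \<Rightarrow> ('a \<Rightarrow> 'a \<Rightarrow> 'k) \<Rightarrow> ('a list \<Rightarrow> 'a) \<Rightarrow> bool" where
  "irreducible_alg sc V0 V1 n B M \<longleftrightarrow> \<not> (\<exists>I J. is_ideal sc V0 V1 n M I \<and> is_ideal sc V0 V1 n M J \<and>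
      I \<noteq> {0} \<and> J \<noteq> {0} \<and> I \<inter> J = {0} \<and> ssum I J = ssum V0 V1 \<and> nondeg_on B I \<and> nondeg_on B J)"

definition trivial_one_dim ::
  "('k::field \<Rightarrow> 'a::ab_group_add \<Rightarrow> 'a) \<Rightarrow> 'a set \<Rightarrow> 'a set \<Rightarrow> nat \<Rightarrow> ('a list \<Rightarrow> 'a) \<Rightarrow> bool" where
  "trivial_one_dim sc V0 V1 n M \<longleftrightarrow> (\<exists>v. v \<noteq> 0 \<and> ssum V0 V1 = range (\<lambda>c. sc c v)) \<and>
     (\<forall>as. length as = n \<and> set as \<subseteq> ssum V0 V1 \<longrightarrow> M as = 0)"

definition simple_alg ::
  "('k::field \<Rightarrow> 'a::ab_group_add \<Rightarrow> 'a) \<Rightarrow> 'a set \<Rightarrow> 'a set \<Rightarrow> nat \<Rightarrow> ('a list \<Rightarrow> 'a) \<Rightarrow> bool" where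
  "simple_alg sc V0 V1 n M \<longleftrightarrow> \<not> trivial_one_dim sc V0 V1 n M \<and>
     \<not> (\<exists>I. is_ideal sc V0 V1 n M I \<and> I \<noteq> {0} \<and> I \<noteq> ssum V0 V1)"

definition maximal_nontrivial_ideal ::
  "('k::field \<Rightarrow> 'a::ab_group_add \<Rightarrow> 'a) \<Rightarrow> 'a set \<Rightarrow> 'a set \<Rightarrow> nat \<Rightarrow> ('a list \<Rightarrow> 'a) \<Rightarrow> 'a set \<Rightarrow> bool" where
  "maximal_nontrivial_ideal sc V0 V1 n M I \<longleftrightarrow> is_ideal sc V0 V1 n M I \<and> I \<noteq> {0} \<and> I \<noteq> ssum V0 V1 \<and>
     (\<forall>J. is_ideal sc V0 V1 n M J \<and> I \<subseteq> J \<and> J \<noteq> ssum V0 V1 \<longrightarrow> J = I)"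

definition super_iso ::
  "('k::field \<Rightarrow> 'a::ab_group_add \<Rightarrow> 'a) \<Rightarrow> 'a set \<Rightarrow> 'a set \<Rightarrow> nat \<Rightarrow> ('a \<Rightarrow> 'a \<Rightarrow> 'k) \<Rightarrow> ('a list \<Rightarrow> 'a) \<Rightarrow>
   ('k \<Rightarrow> 'b::ab_group_add \<Rightarrow> 'b) \<Rightarrow> 'b set \<Rightarrow> 'b set \<Rightarrow> ('b \<Rightarrow> 'b \<Rightarrow> 'k) \<Rightarrow> ('b list \<Rightarrow> 'b) \<Rightarrow>
   ('a \<Rightarrow> 'b) \<Rightarrow> bool" where
  "super_iso sc V0 V1 n B M sc' W0 W1 B' M' \<phi> \<longleftrightarrow>
     bij_betw \<phi> (ssum V0 V1) (ssum W0 W1) \<and> \<phi> ` V0 = W0 \<and> \<phi> ` V1 = W1 \<and>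
     (\<forall>x\<in>ssum V0 V1. \<forall>y\<in>ssum V0 V1. \<forall>c. \<phi> (x + y) = \<phi> x + \<phi> y \<and> \<phi> (sc c x) = sc' c (\<phi> x)) \<and>
     (\<forall>x\<in>ssum V0 V1. \<forall>y\<in>ssum V0 V1. B' (\<phi> x) (\<phi> y) = B x y) \<and>
     (\<forall>as. length as = n \<and> set as \<subseteq> ssum V0 V1 \<longrightarrow> \<phi> (M as) = M' (map \<phi> as))"

text \<open>The space g lives in (nat => k) with pointwise scaling; h is a graded subspace H of the
  ambient space of the given algebra; h* is the space of linear functionals on H (represented
  as functions vanishing outside H). The double extension d = g + h + h* is realised on the
  type (nat => k) * v * (v => k).\<close>

definition scG :: "'k::field \<Rightarrow> (nat \<Rightarrow> 'k) \<Rightarrow> (nat \<Rightarrow> 'k)" where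
  "scG c f = (\<lambda>i. c * f i)"

definition hdual :: "('k::field \<Rightarrow> 'v::ab_group_add \<Rightarrow> 'v) \<Rightarrow> 'v set \<Rightarrow> ('v \<Rightarrow> 'k) set" where
  "hdual sc H = {\<alpha>. (\<forall>x\<in>H. \<forall>y\<in>H. \<forall>c. \<alpha> (x + y) = \<alpha> x + \<alpha> y \<and> \<alpha> (sc c x) = c * \<alpha> x) \<and>
                    (\<forall>x. x \<notin> H \<longrightarrow> \<alpha> x = 0)}"

definition hdual_par :: "('k::field \<Rightarrow> 'v::ab_group_add \<Rightarrow> 'v) \<Rightarrow> 'v set \<Rightarrow> 'v set \<Rightarrow> 'v set \<Rightarrow> bool \<Rightarrow> ('v \<Rightarrow> 'k) set" where
  "hdual_par sc V0 V1 H p = {\<alpha> \<in> hdual sc H. \<forall>x \<in> H \<inter> par_part V0 V1 (\<not> p). \<alpha> x = 0}"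

definition scD :: "('k::field \<Rightarrow> 'v \<Rightarrow> 'v) \<Rightarrow> 'k \<Rightarrow> (nat \<Rightarrow> 'k) \<times> 'v \<times> ('v \<Rightarrow> 'k) \<Rightarrow> (nat \<Rightarrow> 'k) \<times> 'v \<times> ('v \<Rightarrow> 'k)" where
  "scD sc c d = (scG c (fst d), sc c (fst (snd d)), (\<lambda>v. c * snd (snd d) v))"

definition dpart :: "('k::field \<Rightarrow> 'v::ab_group_add \<Rightarrow> 'v) \<Rightarrow> 'v set \<Rightarrow> 'v set \<Rightarrow> 'v set \<Rightarrow>
    (nat \<Rightarrow> 'k) set \<Rightarrow> (nat \<Rightarrow> 'k) set \<Rightarrow> bool \<Rightarrow> ((nat \<Rightarrow> 'k) \<times> 'v \<times> ('v \<Rightarrow> 'k)) set" where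
  "dpart sc V0 V1 H G0 G1 p = {(g, x, \<alpha>). g \<in> par_part G0 G1 p \<and> x \<in> H \<inter> par_part V0 V1 p \<and>
      \<alpha> \<in> hdual_par sc V0 V1 H p}"

definition even_part :: "'v::ab_group_add set \<Rightarrow> 'v set \<Rightarrow> 'v \<Rightarrow> 'v" where
  "even_part V0 V1 x = (THE y. y \<in> V0 \<and> x - y \<in> V1)"

text \<open>Orthogonal sum of the form of g and the form on h + h* with (alpha,x) = alpha(x),
  (x,alpha) = -(-1)^(|alpha||x|) alpha(x).\<close>
definition formD :: "'v::ab_group_add set \<Rightarrow> 'v set \<Rightarrow> ((nat \<Rightarrow> 'k) \<Rightarrow> (nat \<Rightarrow> 'k) \<Rightarrow> 'k::field) \<Rightarrow>
    (nat \<Rightarrow> 'k) \<times> 'v \<times> ('v \<Rightarrow> 'k) \<Rightarrow> (nat \<Rightarrow> 'k) \<times> 'v \<times> ('v \<Rightarrow> 'k) \<Rightarrow> 'k" where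
  "formD V0 V1 Bg d1 d2 =
     (let (g1, x1, a1) = d1; (g2, x2, a2) = d2; x1e = even_part V0 V1 x1 in
      Bg g1 g2 + a1 x2 - a2 x1e + a2 (x1 - x1e))"

text \<open>The blocks of d: label 0 = g, 1 = h, 2 = h*.\<close>
definition dblock :: "('k::field \<Rightarrow> 'v::ab_group_add \<Rightarrow> 'v) \<Rightarrow> 'v set \<Rightarrow> (nat \<Rightarrow> 'k) set \<Rightarrow> nat \<Rightarrow>
    ((nat \<Rightarrow> 'k) \<times> 'v \<times> ('v \<Rightarrow> 'k)) set" where
  "dblock sc H G l = (if l = 0 then (\<lambda>g. (g, 0, 0)) ` G
                      else if l = 1 then (\<lambda>x. (0, x, 0)) ` H
                      else (\<lambda>\<alpha>. (0, 0, \<alpha>)) ` hdual sc H)"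

text \<open>Generalized double extension of g = (G0,G1,Bg,Mg) by the subalgebra h = H of the
  algebra (V0,V1,M), with multiplication Md on d.  The derived potential of Md is encoded by
  the supersymmetric (n+1)-linear form T(a0,...,an) = (a0, Md(a1,...,an)); its component in
  S^p h* . S^q g . S^r h is the restriction of T to arguments of which p lie in h, q in g and
  r in h*.  The condition says: the potential equals mu + nu + sum psi_i, with mu the potential
  of g, nu the multiplication of h, and psi_i (i = 1..n+1) the component in S^i h* . S^(n-i+1) g.\<close>
definition gen_double_ext ::
  "('k::field \<Rightarrow> 'v::ab_group_add \<Rightarrow> 'v) \<Rightarrow> 'v set \<Rightarrow> 'v set \<Rightarrow> nat \<Rightarrow> ('v list \<Rightarrow> 'v) \<Rightarrow> 'v set \<Rightarrow>
   (nat \<Rightarrow> 'k) set \<Rightarrow> (nat \<Rightarrow> 'k) set \<Rightarrow> ((nat \<Rightarrow> 'k) \<Rightarrow> (nat \<Rightarrow> 'k) \<Rightarrow> 'k) \<Rightarrow> ((nat \<Rightarrow> 'k) list \<Rightarrow> (nat \<Rightarrow> 'k)) \<Rightarrow>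
   (((nat \<Rightarrow> 'k) \<times> 'v \<times> ('v \<Rightarrow> 'k)) list \<Rightarrow> (nat \<Rightarrow> 'k) \<times> 'v \<times> ('v \<Rightarrow> 'k)) \<Rightarrow>
   (nat \<Rightarrow> ((nat \<Rightarrow> 'k) \<times> 'v \<times> ('v \<Rightarrow> 'k)) list \<Rightarrow> 'k) \<Rightarrow> bool" where
  "gen_double_ext sc V0 V1 n M H G0 G1 Bg Mg Md \<psi> \<longleftrightarrow>
     comm_inv_superalg scG G0 G1 n Bg Mg \<and>
     comm_inv_superalg (scD sc) (dpart sc V0 V1 H G0 G1 False) (dpart sc V0 V1 H G0 G1 True) n
        (formD V0 V1 Bg) Md \<and>
     (\<forall>ls as. length ls = Suc n \<and> length as = Suc n \<and>
        (\<forall>j < Suc n. ls ! j < 3 \<and> as ! j \<in> dblock sc H (ssum G0 G1) (ls ! j)) \<longrightarrow>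
        (let cG = count_list ls 0; cH = count_list ls 1; cS = count_list ls 2;
             T = formD V0 V1 Bg (hd as) (Md (tl as)) in
          (cG = Suc n \<longrightarrow> T = Bg (fst (hd as)) (Mg (map fst (tl as)))) \<and>
          (cH = n \<and> cS = 1 \<and> ls ! 0 = 2 \<longrightarrow> T = snd (snd (hd as)) (M (map (fst \<circ> snd) (tl as)))) \<and>
          (cS = 0 \<and> 1 \<le> cH \<longrightarrow> T = \<psi> cH as) \<and>
          (\<not> (cG = Suc n \<or> (cH = n \<and> cS = 1) \<or> (cS = 0 \<and> 1 \<le> cH)) \<longrightarrow> T = 0)))"

end

theory Submission
  imports Defs
begin

lemma
  assumes "bilinear_on sc V B" "x \<in> V" "y \<in> V" "z \<in> V"
  shows bilinear_on_add_left: "B (x + y) z = B x z + B y z"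
    and bilinear_on_add_right: "B z (x + y) = B z x + B z y"
  using assms unfolding bilinear_on_def by blast+

lemma
  assumes "bilinear_on sc V B" "x \<in> V" "z \<in> V"
  shows bilinear_on_scale_left: "B (sc c x) z = c * B x z"
    and bilinear_on_scale_right: "B z (sc c x) = c * B z x"
  using assms unfolding bilinear_on_def by blast+

definition scale_fun :: "'k::field \<Rightarrow> ('a \<Rightarrow> 'k) \<Rightarrow> ('a \<Rightarrow> 'k)" where
  "scale_fun c f = (\<lambda>x. c * f x)"

lemma vector_space_scale_fun: "vector_space (scale_fun :: 'k::field \<Rightarrow> ('a \<Rightarrow> 'k) \<Rightarrow> ('a \<Rightarrow> 'k))"
  unfolding vector_space_def module_def scale_fun_def
  by (auto simp: fun_eq_iff algebra_simps)

lemma vector_space_scD: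
  assumes "vector_space sc"
  shows "vector_space (scD sc)"
proof -
  interpret vector_space sc by fact
  show ?thesis
    unfolding vector_space_def module_def scD_def scG_def
    by (auto simp: fun_eq_iff algebra_simps scale_right_distrib scale_left_distrib)
qed

lemma scale_fun_sum_apply: "(\<Sum>b\<in>E. scale_fun (u b) (g b)) x = (\<Sum>b\<in>E. u b * g b x)"
  by (induction E rule: infinite_finite_induct) (auto simp: scale_fun_def)

lemma linear_on_sum:
  fixes sc :: "'k::field \<Rightarrow> 'v::ab_group_add \<Rightarrow> 'v"
  assumes "vector_space sc" and sub: "module.subspace sc W"
    and lin: "\<forall>x\<in>W. \<forall>y\<in>W. \<forall>c. f (x + y) = f x + f y \<and> f (sc c x) = c * f x"
    and "finite E" "E \<subseteq> W"
  shows "f (\<Sum>b\<in>E. sc (u b) b) = (\<Sum>b\<in>E. u b * f b)"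
  using \<open>finite E\<close> \<open>E \<subseteq> W\<close>
proof (induction E rule: finite_induct)
  interpret vector_space sc by fact
  case empty
  have "f 0 = f (0 + 0)" by simp
  also have "\<dots> = f 0 + f 0" using lin sub by (meson subspace_0)
  finally have "f 0 = 0" by (metis add_cancel_right_right)
  then show ?case by simp
next
  interpret vector_space sc by fact
  case (insert a F)
  have "(\<Sum>b\<in>F. sc (u b) b) \<in> W"
    using insert sub by (intro subspace_sum) (auto intro: subspace_scale)
  moreover have "sc (u a) a \<in> W" using insert sub by (simp add: subspace_scale)
  ultimately show ?case using insert lin by simp
qed

lemma card_independent_functionals_le:
  fixes sc :: "'k::field \<Rightarrow> 'v::ab_group_add \<Rightarrow> 'v"
  assumes vs: "vector_space sc" and indE: "\<not> module.dependent sc E" and finE: "finite E"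
    and indF: "\<not> module.dependent (scale_fun :: 'k \<Rightarrow> ('v \<Rightarrow> 'k) \<Rightarrow> _) F"
    and F: "\<And>g. g \<in> F \<Longrightarrow> (\<forall>x\<in>module.span sc E. \<forall>y\<in>module.span sc E. \<forall>c.
                 g (x + y) = g x + g y \<and> g (sc c x) = c * g x) \<and>
               (\<forall>x. x \<notin> module.span sc E \<longrightarrow> g x = 0)"
  shows "card F \<le> card E"
proof -
  interpret vector_space sc by fact
  interpret D: vector_space "scale_fun :: 'k \<Rightarrow> ('v \<Rightarrow> 'k) \<Rightarrow> ('v \<Rightarrow> 'k)"
    by (rule vector_space_scale_fun)
  define coord where "coord b = (\<lambda>x. if x \<in> span E then representation E x b else 0)" for b
  have "F \<subseteq> D.span (coord ` E)"
  proof
    fix g assume g: "g \<in> F"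
    have "g = (\<Sum>b\<in>E. scale_fun (g b) (coord b))"
    proof
      fix x
      show "g x = (\<Sum>b\<in>E. scale_fun (g b) (coord b)) x"
      proof (cases "x \<in> span E")
        case True
        have "g x = g (\<Sum>b\<in>E. sc (representation E x b) b)"
          using sum_representation_eq[OF indE True finE] by simp
        also have "\<dots> = (\<Sum>b\<in>E. representation E x b * g b)"
          using linear_on_sum[OF vs subspace_span, of E g] F[OF g] finE span_base by blast
        finally show ?thesis using True by (simp add: scale_fun_sum_apply coord_def mult.commute)
      qed (use F[OF g] in \<open>simp add: scale_fun_sum_apply coord_def\<close>)
    qed
    also have "\<dots> \<in> D.span (coord ` E)"
      by (intro D.span_sum D.span_scale D.span_base) auto
    finally show "g \<in> D.span (coord ` E)" .
  qed
  then have "card F \<le> card (coord ` E)"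
    using D.independent_span_bound[OF _ indF] finE by blast
  also have "\<dots> \<le> card E" using finE card_image_le by blast
  finally show ?thesis .
qed

definition zero_outside :: "'v set \<Rightarrow> ('v \<Rightarrow> 'k::zero) \<Rightarrow> 'v \<Rightarrow> 'k" where
  "zero_outside W g = (\<lambda>x. if x \<in> W then g x else 0)"

context
  fixes sc :: "'k::field \<Rightarrow> 'v::ab_group_add \<Rightarrow> 'v" and W E :: "'v set" and B :: "'v \<Rightarrow> 'v \<Rightarrow> 'k"
  assumes vs: "vector_space sc" and sub: "module.subspace sc W"
    and bil: "bilinear_on sc W B" and nd: "nondeg_on B W"
    and EW: "E \<subseteq> W" and indE: "\<not> module.dependent sc E" and finE: "finite E"
begin

lemma combination_in_subspace: "(\<Sum>b\<in>E. sc (u b) b) \<in> W"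
proof -
  interpret vector_space sc by (fact vs)
  show ?thesis using EW sub by (intro subspace_sum subspace_scale) auto
qed

lemma form_functional_sum:
  "zero_outside W (B (\<Sum>b\<in>E. sc (u b) b)) = (\<Sum>b\<in>E. scale_fun (u b) (zero_outside W (B b)))"
proof -
  have "B (\<Sum>b\<in>E. sc (u b) b) x = (\<Sum>b\<in>E. u b * B b x)" if "x \<in> W" for x
    using linear_on_sum[OF vs sub _ finE EW, of "\<lambda>w. B w x"] bil that
    unfolding bilinear_on_def by blast
  then show ?thesis by (auto simp: zero_outside_def scale_fun_sum_apply)
qed

lemma form_functional_sum_eq_0:
  assumes "zero_outside W (B (\<Sum>b\<in>E. sc (u b) b)) = 0"
  shows "\<forall>b\<in>E. u b = 0"
proof -
  interpret vector_space sc by (fact vs)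
  have "B (\<Sum>b\<in>E. sc (u b) b) x = 0" if "x \<in> W" for x
    using fun_cong[OF assms, of x] that by (simp add: zero_outside_def)
  then have "(\<Sum>b\<in>E. sc (u b) b) = 0" using nd combination_in_subspace unfolding nondeg_on_def by blast
  then show ?thesis using independentD[OF indE finE subset_refl] by blast
qed

lemma inj_on_form_functional: "inj_on (\<lambda>b. zero_outside W (B b)) E"
proof (rule inj_onI)
  interpret vector_space sc by (fact vs)
  fix b1 b2 assume b: "b1 \<in> E" "b2 \<in> E" "zero_outside W (B b1) = zero_outside W (B b2)"
  have b12: "b1 \<in> W" "sc (- 1) b2 \<in> W" using b EW sub subspace_scale by blast+
  then have b12: "b1 \<in> W" "sc (- 1) b2 \<in> W" "b1 + sc (- 1) b2 \<in> W"
    using sub subspace_add by blast+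
  have "B (b1 + sc (- 1) b2) x = 0" if "x \<in> W" for x
    using fun_cong[OF b(3), of x] that b12 b EW
      bilinear_on_add_left[OF bil b12(1,2) that] bilinear_on_scale_left[OF bil _ that, of b2 "- 1"]
    by (auto simp: zero_outside_def)
  then have "b1 + sc (- 1) b2 = 0" using nd b12 unfolding nondeg_on_def by blast
  then show "b1 = b2" by (simp add: scale_minus_left)
qed

lemma form_functionals_independent:
  "\<not> module.dependent scale_fun ((\<lambda>b. zero_outside W (B b)) ` E)"
proof -
  interpret D: vector_space "scale_fun :: 'k \<Rightarrow> ('v \<Rightarrow> 'k) \<Rightarrow> ('v \<Rightarrow> 'k)"
    by (rule vector_space_scale_fun)
  note inj = inj_on_form_functional
  show ?thesis
    unfolding D.dependent_finite[OF finite_imageI[OF finE]]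
  proof
    assume "\<exists>u. (\<exists>v\<in>(\<lambda>b. zero_outside W (B b)) ` E. u v \<noteq> 0) \<and>
      (\<Sum>v\<in>(\<lambda>b. zero_outside W (B b)) ` E. scale_fun (u v) v) = 0"
    then obtain u where "\<exists>b\<in>E. u (zero_outside W (B b)) \<noteq> 0"
      "(\<Sum>b\<in>E. scale_fun (u (zero_outside W (B b))) (zero_outside W (B b))) = 0"
      by (auto simp: sum.reindex[OF inj])
    then show False
      using form_functional_sum_eq_0[of "\<lambda>b. u (zero_outside W (B b))"] form_functional_sum by auto
  qed
qed

end

lemma nondeg_form_represents_functional:
  fixes sc :: "'k::field \<Rightarrow> 'v::ab_group_add \<Rightarrow> 'v"
  assumes vs: "vector_space sc" and sub: "module.subspace sc W"
    and fin: "finite S" and WS: "W \<subseteq> module.span sc S"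
    and bil: "bilinear_on sc W B" and nd: "nondeg_on B W"
    and lin: "\<forall>x\<in>W. \<forall>y\<in>W. \<forall>c. f (x + y) = f x + f y \<and> f (sc c x) = c * f x"
  shows "\<exists>w\<in>W. \<forall>x\<in>W. B w x = f x"
proof -
  interpret vector_space sc by fact
  interpret D: vector_space "scale_fun :: 'k \<Rightarrow> ('v \<Rightarrow> 'k) \<Rightarrow> ('v \<Rightarrow> 'k)"
    by (rule vector_space_scale_fun)
  obtain E where EW: "E \<subseteq> W" and indE: "independent E" and WE: "W \<subseteq> span E"
    by (rule basis_exists[of W]) blast
  have finE: "finite E" using independent_span_bound[OF fin indE] EW WS by blast
  have W_eq: "W = span E" using WE EW sub by (metis span_minimal subset_antisym)
  note ctxt = vs sub bil nd EW indE finE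
  define \<Phi> where "\<Phi> = (\<lambda>b. zero_outside W (B b))"
  have "zero_outside W f \<in> D.span (\<Phi> ` E)"
  proof (rule ccontr)
    assume out: "zero_outside W f \<notin> D.span (\<Phi> ` E)"
    have "card (insert (zero_outside W f) (\<Phi> ` E)) \<le> card E"
    proof (rule card_independent_functionals_le[OF vs indE finE])
      show "D.independent (insert (zero_outside W f) (\<Phi> ` E))"
        using D.independent_insertI[OF out form_functionals_independent[OF ctxt, folded \<Phi>_def]] .
      have zero_outside_linear:
        "(\<forall>x\<in>W. \<forall>y\<in>W. \<forall>c. zero_outside W g (x + y) = zero_outside W g x + zero_outside W g y \<and>
          zero_outside W g (sc c x) = c * zero_outside W g x) \<and> (\<forall>x. x \<notin> W \<longrightarrow> zero_outside W g x = 0)"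
        if "\<forall>x\<in>W. \<forall>y\<in>W. \<forall>c. g (x + y) = g x + g y \<and> g (sc c x) = c * g x" for g
        using that unfolding zero_outside_def by (simp add: subspace_add[OF sub] subspace_scale[OF sub])
      fix g assume "g \<in> insert (zero_outside W f) (\<Phi> ` E)"
      then consider "g = zero_outside W f" | b where "b \<in> E" "g = zero_outside W (B b)"
        unfolding \<Phi>_def by blast
      then show "(\<forall>x\<in>span E. \<forall>y\<in>span E. \<forall>c. g (x + y) = g x + g y \<and> g (sc c x) = c * g x) \<and>
          (\<forall>x. x \<notin> span E \<longrightarrow> g x = 0)"
      proof cases
        case 1
        then show ?thesis using zero_outside_linear[OF lin] by (simp add: W_eq[symmetric])
      next
        case (2 b)
        then have "b \<in> W" using EW by blast
        then have "\<forall>x\<in>W. \<forall>y\<in>W. \<forall>c. B b (x + y) = B b x + B b y \<and> B b (sc c x) = c * B b x"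
          using bilinear_on_add_right[OF bil] bilinear_on_scale_right[OF bil] by simp
        then show ?thesis using zero_outside_linear 2(2) by (simp add: W_eq[symmetric])
      qed
    qed
    moreover have "zero_outside W f \<notin> \<Phi> ` E" using out D.span_base by blast
    ultimately show False using card_image[OF inj_on_form_functional[OF ctxt, folded \<Phi>_def]] finE
      by simp
  qed
  then obtain u where "zero_outside W f = (\<Sum>v\<in>\<Phi> ` E. scale_fun (u v) v)"
    using D.span_finite[OF finite_imageI[OF finE]] by auto
  then have eq: "zero_outside W f = zero_outside W (B (\<Sum>b\<in>E. sc (u (\<Phi> b)) b))"
    using form_functional_sum[OF ctxt] inj_on_form_functional[OF ctxt]
    unfolding \<Phi>_def by (simp add: sum.reindex)
  have "B (\<Sum>b\<in>E. sc (u (\<Phi> b)) b) x = f x" if "x \<in> W" for x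
    using fun_cong[OF eq, of x] that by (simp add: zero_outside_def)
  moreover have "(\<Sum>b\<in>E. sc (u (\<Phi> b)) b) \<in> W" by (rule combination_in_subspace[OF ctxt])
  ultimately show ?thesis by blast
qed

lemma nary_on_closed: "nary_on sc V n M \<Longrightarrow> length as = n \<Longrightarrow> set as \<subseteq> V \<Longrightarrow> M as \<in> V"
  unfolding nary_on_def by blast

lemma nary_on_add:
  "nary_on sc V n M \<Longrightarrow> length as = n \<Longrightarrow> set as \<subseteq> V \<Longrightarrow> i < n \<Longrightarrow> x \<in> V \<Longrightarrow> y \<in> V \<Longrightarrow>
    M (as[i := x + y]) = M (as[i := x]) + M (as[i := y])"
  unfolding nary_on_def by blast

lemma nary_on_scale:
  "nary_on sc V n M \<Longrightarrow> length as = n \<Longrightarrow> set as \<subseteq> V \<Longrightarrow> i < n \<Longrightarrow> x \<in> V \<Longrightarrow>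
    M (as[i := sc c x]) = sc c (M (as[i := x]))"
  unfolding nary_on_def by blast

lemma commutative_naryD:
  "commutative_nary sc V0 V1 n M \<Longrightarrow> length as = n \<Longrightarrow> set as \<subseteq> ssum V0 V1 \<Longrightarrow> Suc i < n \<Longrightarrow>
    x \<in> par_part V0 V1 p \<Longrightarrow> y \<in> par_part V0 V1 q \<Longrightarrow>
    M (as[i := x, Suc i := y]) = sc (psign p q) (M (as[i := y, Suc i := x]))"
  unfolding commutative_nary_def by blast

lemma invariant_naryD:
  "invariant_nary V0 V1 n B M \<Longrightarrow> a0 \<in> par_part V0 V1 p \<Longrightarrow> a1 \<in> par_part V0 V1 q \<Longrightarrow>
    length rest = n - 1 \<Longrightarrow> set rest \<subseteq> ssum V0 V1 \<Longrightarrow>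
    B a0 (M (a1 # rest)) = psign p q * B a1 (M (a0 # rest))"
  unfolding invariant_nary_def by blast

lemma ssum_image:
  assumes add: "\<And>x y. x \<in> ssum V0 V1 \<Longrightarrow> y \<in> ssum V0 V1 \<Longrightarrow> f (x + y) = f x + f y"
    and "0 \<in> V0" "0 \<in> V1"
  shows "ssum (f ` V0) (f ` V1) = f ` ssum V0 V1"
proof -
  have V: "V0 \<subseteq> ssum V0 V1" "V1 \<subseteq> ssum V0 V1"
    using assms(2,3) unfolding ssum_def by force+
  show ?thesis
  proof
    show "ssum (f ` V0) (f ` V1) \<subseteq> f ` ssum V0 V1"
    proof
      fix z assume "z \<in> ssum (f ` V0) (f ` V1)"
      then obtain x y where "x \<in> V0" "y \<in> V1" "z = f x + f y" unfolding ssum_def by auto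
      moreover have "f (x + y) = f x + f y" using add V calculation by blast
      moreover have "x + y \<in> ssum V0 V1" using calculation unfolding ssum_def by blast
      ultimately show "z \<in> f ` ssum V0 V1" by force
    qed
    show "f ` ssum V0 V1 \<subseteq> ssum (f ` V0) (f ` V1)"
    proof
      fix z assume "z \<in> f ` ssum V0 V1"
      then obtain x y where "x \<in> V0" "y \<in> V1" "z = f (x + y)" unfolding ssum_def by auto
      moreover have "f (x + y) = f x + f y" using add V calculation by blast
      ultimately show "z \<in> ssum (f ` V0) (f ` V1)" unfolding ssum_def by blast
    qed
  qed
qed

lemma
  assumes "\<alpha> \<in> hdual sc H"
  shows hdual_add: "x \<in> H \<Longrightarrow> y \<in> H \<Longrightarrow> \<alpha> (x + y) = \<alpha> x + \<alpha> y"
    and hdual_scale: "x \<in> H \<Longrightarrow> \<alpha> (sc c x) = c * \<alpha> x"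
    and hdual_outside: "x \<notin> H \<Longrightarrow> \<alpha> x = 0"
  using assms unfolding hdual_def by blast+

lemma map_preimage:
  assumes "set ys \<subseteq> f ` A"
  obtains xs where "set xs \<subseteq> A" "map f xs = ys"
proof
  show "set (map (inv_into A f) ys) \<subseteq> A" using assms by (auto intro: inv_into_into)
  show "map f (map (inv_into A f) ys) = ys" using assms by (auto simp: f_inv_into_f intro!: map_idI)
qed

lemma set_update_subset: "set xs \<subseteq> S \<Longrightarrow> x \<in> S \<Longrightarrow> set (xs[i := x]) \<subseteq> S"
  using set_update_subset_insert by fastforce

lemma set_subset_of_nth: "(\<And>i. i < length xs \<Longrightarrow> xs ! i \<in> X) \<Longrightarrow> set xs \<subseteq> X"
  by (auto simp: in_set_conv_nth)

definition remove_nth :: "nat \<Rightarrow> 'a list \<Rightarrow> 'a list" where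
  "remove_nth j xs = take j xs @ drop (Suc j) xs"

lemma length_remove_nth [simp]: "j < length xs \<Longrightarrow> length (remove_nth j xs) = length xs - 1"
  unfolding remove_nth_def by simp

lemma in_set_remove_nthD:
  assumes "x \<in> set (remove_nth j xs)"
  shows "\<exists>i<length xs. i \<noteq> j \<and> xs ! i = x"
proof -
  from assms consider "x \<in> set (take j xs)" | "x \<in> set (drop (Suc j) xs)"
    unfolding remove_nth_def by auto
  then show ?thesis
  proof cases
    case 1
    then obtain i where "i < length (take j xs)" "take j xs ! i = x" by (auto simp: in_set_conv_nth)
    then show ?thesis by (intro exI[of _ i]) auto
  next
    case 2
    then obtain i where "i < length (drop (Suc j) xs)" "drop (Suc j) xs ! i = x"
      by (auto simp: in_set_conv_nth)
    then show ?thesis by (intro exI[of _ "Suc j + i"]) auto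
  qed
qed

lemma set_remove_nth_subset: "set (remove_nth j xs) \<subseteq> set xs"
  unfolding remove_nth_def using set_take_subset set_drop_subset by fastforce

lemma nth_in_set_remove_nth:
  assumes "k < length xs" "k \<noteq> j"
  shows "xs ! k \<in> set (remove_nth j xs)"
proof (cases "k < j")
  case True
  then have "xs ! k \<in> set (take j xs)" using assms(1) by (metis in_set_conv_nth length_take min_less_iff_conj nth_take)
  then show ?thesis unfolding remove_nth_def by simp
next
  case False
  then have "xs ! k = drop (Suc j) xs ! (k - Suc j)" "k - Suc j < length (drop (Suc j) xs)"
    using assms by auto
  then have "xs ! k \<in> set (drop (Suc j) xs)" by (metis nth_mem)
  then show ?thesis unfolding remove_nth_def by simp
qed

lemma count_list_remove_nth:
  assumes "j < length xs"
  shows "count_list xs a = count_list (remove_nth j xs) a + (if xs ! j = a then 1 else 0)"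
proof -
  have e: "take j xs @ xs ! j # drop (Suc j) xs = xs" by (rule sym[OF id_take_nth_drop[OF assms]])
  have "count_list (take j xs @ xs ! j # drop (Suc j) xs) a =
      count_list (remove_nth j xs) a + (if xs ! j = a then 1 else 0)"
    unfolding remove_nth_def by simp
  then show ?thesis unfolding e .
qed

lemma count_list_eq_length_iff: "count_list xs a = length xs \<longleftrightarrow> set xs \<subseteq> {a}"
proof (induction xs)
  case (Cons x xs)
  have "count_list xs a \<le> length xs" by (rule count_le_length)
  then show ?case using Cons by auto
qed simp

lemma nth_eq_if_count_list_eq_length:
  "count_list xs a = length xs \<Longrightarrow> i < length xs \<Longrightarrow> xs ! i = a"
  unfolding count_list_eq_length_iff by (meson insertE nth_mem singletonD subsetD)

lemma nth_eq_if_count_list_one_less: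
  assumes "Suc (count_list xs a) = length xs" "j < length xs" "xs ! j \<noteq> a"
    and "k < length xs" "k \<noteq> j"
  shows "xs ! k = a"
proof -
  have "count_list (remove_nth j xs) a = length (remove_nth j xs)"
    using count_list_remove_nth[OF assms(2), of a] assms(1-3) by simp
  then have "set (remove_nth j xs) \<subseteq> {a}" by (simp add: count_list_eq_length_iff)
  then show ?thesis using nth_in_set_remove_nth[OF assms(4,5)] by blast
qed

lemma count_list_labels:
  assumes "\<forall>l\<in>set ls. l < (3::nat)"
  shows "count_list ls 0 + count_list ls 1 + count_list ls 2 = length ls"
proof -
  have "set ls \<subseteq> {0, 1, 2}" using assms by auto
  then show ?thesis using sum_count_set[of ls "{0, 1, 2}"] by simp
qed

lemma labels_single_zero:
  assumes ls: "length ls = Suc n" "\<forall>l\<in>set ls. l < (3::nat)"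
    and c: "count_list ls 2 = 0" "count_list ls 1 = n"
  obtains j where "j < Suc n" "ls ! j = 0" "\<And>k. k < Suc n \<Longrightarrow> k \<noteq> j \<Longrightarrow> ls ! k = 1"
proof -
  have "count_list ls 0 \<noteq> 0" using count_list_labels[OF ls(2)] ls(1) c by simp
  then obtain j where j: "j < Suc n" "ls ! j = 0"
    using ls(1) by (metis count_list_0_iff in_set_conv_nth)
  moreover have "ls ! k = 1" if "k < Suc n" "k \<noteq> j" for k
    using nth_eq_if_count_list_one_less[of ls 1 j k] ls(1) c(2) j that by simp
  ultimately show ?thesis using that by blast
qed

lemma labels_two_and_other:
  assumes ls: "length ls = Suc n" "\<forall>l\<in>set ls. l < (3::nat)"
    and c: "\<not> (count_list ls 0 = Suc n \<or> count_list ls 1 = n \<and> count_list ls 2 = 1 \<or>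
              count_list ls 2 = 0 \<and> 1 \<le> count_list ls 1)"
  obtains j k where "j < Suc n" "k < Suc n" "k \<noteq> j" "ls ! j = 2" "ls ! k \<noteq> 1"
proof -
  have "count_list ls 2 \<noteq> 0" using count_list_labels[OF ls(2)] ls(1) c by auto
  then obtain j where j: "j < Suc n" "ls ! j = 2"
    using ls(1) by (metis count_list_0_iff in_set_conv_nth)
  have "\<exists>k<Suc n. k \<noteq> j \<and> ls ! k \<noteq> 1"
  proof (rule ccontr)
    assume none: "\<not> ?thesis"
    have "set (remove_nth j ls) \<subseteq> {1}"
    proof
      fix x assume "x \<in> set (remove_nth j ls)"
      then obtain i where "i < length ls" "i \<noteq> j" "ls ! i = x" by (blast dest: in_set_remove_nthD)
      then show "x \<in> {1}" using none ls(1) by auto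
    qed
    then have "count_list (remove_nth j ls) 1 = n" "count_list (remove_nth j ls) 2 = 0"
      using count_list_eq_length_iff[of "remove_nth j ls" 1] j ls(1) by (auto simp: count_list_0_iff)
    then have "count_list ls 1 = n" "count_list ls 2 = 1"
      using count_list_remove_nth[of j ls] j ls(1) by simp_all
    then show False using c by simp
  qed
  then show ?thesis using that j by blast
qed

definition swap_adjacent :: "nat \<Rightarrow> 'a list \<Rightarrow> 'a list" where
  "swap_adjacent i xs = xs[i := xs ! Suc i, Suc i := xs ! i]"

lemma length_swap_adjacent [simp]: "length (swap_adjacent i xs) = length xs"
  unfolding swap_adjacent_def by simp

lemma set_swap_adjacent: "Suc i < length xs \<Longrightarrow> set (swap_adjacent i xs) \<subseteq> set xs"
  unfolding swap_adjacent_def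
  by (metis insert_absorb list_update_id nth_mem set_update_subset_insert Suc_lessD subset_trans
      set_update_subset_insert insert_mono)

lemma swap_adjacent_Cons: "swap_adjacent (Suc i) (x # xs) = x # swap_adjacent i xs"
  unfolding swap_adjacent_def by simp

lemma swap_adjacent_0: "swap_adjacent 0 (x # y # xs) = y # x # xs"
  unfolding swap_adjacent_def by simp

lemma
  assumes "Suc i < length xs"
  shows nth_swap_adjacent: "swap_adjacent i xs ! i = xs ! Suc i"
    and nth_Suc_swap_adjacent: "swap_adjacent i xs ! Suc i = xs ! i"
    and take_swap_adjacent: "take i (swap_adjacent i xs) = take i xs"
    and drop_swap_adjacent: "drop (Suc (Suc i)) (swap_adjacent i xs) = drop (Suc (Suc i)) xs"
  using assms unfolding swap_adjacent_def by simp_all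

lemma remove_nth_swap_adjacent:
  assumes "Suc k < length xs"
  shows "remove_nth k (swap_adjacent k xs) = remove_nth (Suc k) xs"
    and "remove_nth (Suc k) (swap_adjacent k xs) = remove_nth k xs"
proof -
  have k: "k < length xs" using assms by simp
  have d: "drop (Suc k) (swap_adjacent k xs) = xs ! k # drop (Suc (Suc k)) xs"
    using assms nth_Suc_swap_adjacent[OF assms] drop_swap_adjacent[OF assms]
    by (metis Cons_nth_drop_Suc length_swap_adjacent)
  show "remove_nth k (swap_adjacent k xs) = remove_nth (Suc k) xs"
    unfolding remove_nth_def d take_swap_adjacent[OF assms] using k
    by (simp add: take_Suc_conv_app_nth)
  have "take (Suc k) (swap_adjacent k xs) = take k xs @ [xs ! Suc k]"
    using assms nth_swap_adjacent[OF assms] take_swap_adjacent[OF assms]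
    by (simp add: take_Suc_conv_app_nth)
  then show "remove_nth (Suc k) (swap_adjacent k xs) = remove_nth k xs"
    unfolding remove_nth_def drop_swap_adjacent[OF assms] using assms
    by (simp add: Cons_nth_drop_Suc)
qed

locale graded_space = V: vector_space sc
  for sc :: "'k::field \<Rightarrow> 'v::ab_group_add \<Rightarrow> 'v" +
  fixes V0 V1 :: "'v set"
  assumes superspace: "superspace sc V0 V1"
begin

abbreviation A :: "'v set" where "A \<equiv> ssum V0 V1"
abbreviation ev :: "'v \<Rightarrow> 'v" where "ev \<equiv> even_part V0 V1"
abbreviation graded :: "'v set \<Rightarrow> bool" where "graded S \<equiv> graded_subspace sc V0 V1 S"

definition homogeneous :: "'v \<Rightarrow> bool" where
  "homogeneous x \<longleftrightarrow> x \<in> V0 \<or> x \<in> V1"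

lemma subspace_V0: "V.subspace V0" and subspace_V1: "V.subspace V1"
  and V0_Int_V1: "V0 \<inter> V1 = {0}" and finite_spanning: "\<exists>S. finite S \<and> S \<subseteq> A \<and> A \<subseteq> V.span S"
  using superspace unfolding superspace_def by blast+

lemma subspace_A: "V.subspace A"
  unfolding ssum_def by (rule V.subspace_sums[OF subspace_V0 subspace_V1])

lemma V0_subset_A: "V0 \<subseteq> A" using V.subspace_0[OF subspace_V1] unfolding ssum_def by force
lemma V1_subset_A: "V1 \<subseteq> A" using V.subspace_0[OF subspace_V0] unfolding ssum_def by force
lemma par_part_subset_A: "par_part V0 V1 p \<subseteq> A"
  using V0_subset_A V1_subset_A unfolding par_part_def by auto
lemma subspace_par_part: "V.subspace (par_part V0 V1 p)"
  using subspace_V0 subspace_V1 unfolding par_part_def by simp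

lemma A_0: "0 \<in> A" using V.subspace_0[OF subspace_A] .
lemma A_add: "x \<in> A \<Longrightarrow> y \<in> A \<Longrightarrow> x + y \<in> A" using V.subspace_add[OF subspace_A] .
lemma A_scale: "x \<in> A \<Longrightarrow> sc c x \<in> A" using V.subspace_scale[OF subspace_A] .
lemma A_diff: "x \<in> A \<Longrightarrow> y \<in> A \<Longrightarrow> x - y \<in> A" using V.subspace_diff[OF subspace_A] .

lemma even_part_unique:
  assumes "a \<in> V0" "b \<in> V1"
  shows "ev (a + b) = a"
  unfolding even_part_def
proof (rule the_equality)
  show "a \<in> V0 \<and> a + b - a \<in> V1" using assms by simp
  fix y assume y: "y \<in> V0 \<and> a + b - y \<in> V1"
  have "a - y \<in> V0" using V.subspace_diff[OF subspace_V0] assms y by blast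
  moreover have "a - y = (a + b - y) - b" by (simp add: algebra_simps)
  then have "a - y \<in> V1" using V.subspace_diff[OF subspace_V1] assms y by metis
  ultimately have "a - y = 0" using V0_Int_V1 by blast
  then show "y = a" by simp
qed

lemma
  assumes "x \<in> A"
  shows even_part_in_V0: "ev x \<in> V0" and odd_part_in_V1: "x - ev x \<in> V1"
proof -
  obtain a b where ab: "a \<in> V0" "b \<in> V1" "x = a + b" using assms unfolding ssum_def by blast
  then show "ev x \<in> V0" "x - ev x \<in> V1" using even_part_unique by auto
qed

lemma even_part_in_A: "x \<in> A \<Longrightarrow> ev x \<in> A" using even_part_in_V0 V0_subset_A by blast
lemma odd_part_in_A: "x \<in> A \<Longrightarrow> x - ev x \<in> A" using odd_part_in_V1 V1_subset_A by blast

lemma even_part_V0: "x \<in> V0 \<Longrightarrow> ev x = x"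
  using even_part_unique[of x 0] V.subspace_0[OF subspace_V1] by simp

lemma even_part_V1: "x \<in> V1 \<Longrightarrow> ev x = 0"
  using even_part_unique[of 0 x] V.subspace_0[OF subspace_V0] by simp

lemma even_part_add:
  assumes "x \<in> A" "y \<in> A"
  shows "ev (x + y) = ev x + ev y"
proof -
  have "x + y = (ev x + ev y) + ((x - ev x) + (y - ev y))" by (simp add: algebra_simps)
  moreover have "ev x + ev y \<in> V0"
    using even_part_in_V0 assms V.subspace_add[OF subspace_V0] by blast
  moreover have "(x - ev x) + (y - ev y) \<in> V1"
    using odd_part_in_V1 assms V.subspace_add[OF subspace_V1] by blast
  ultimately show ?thesis using even_part_unique by metis
qed

lemma graded_iff: "graded S \<longleftrightarrow> V.subspace S \<and> S \<subseteq> A \<and> (\<forall>x\<in>S. ev x \<in> S)"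
proof
  assume g: "graded S"
  have "ev x \<in> S" if "x \<in> S" for x
  proof -
    have "x \<in> ssum (S \<inter> V0) (S \<inter> V1)" using g that unfolding graded_subspace_def by blast
    then show ?thesis using even_part_unique unfolding ssum_def by auto
  qed
  then show "V.subspace S \<and> S \<subseteq> A \<and> (\<forall>x\<in>S. ev x \<in> S)"
    using g unfolding graded_subspace_def by blast
next
  assume "V.subspace S \<and> S \<subseteq> A \<and> (\<forall>x\<in>S. ev x \<in> S)"
  then have sub: "V.subspace S" and SA: "S \<subseteq> A" and ev: "\<And>x. x \<in> S \<Longrightarrow> ev x \<in> S"
    by blast+
  have "x \<in> ssum (S \<inter> V0) (S \<inter> V1)" if x: "x \<in> S" for x
  proof -
    have "x \<in> A" using SA x by blast
    then have "ev x \<in> S \<inter> V0" "x - ev x \<in> S \<inter> V1"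
      using ev[OF x] V.subspace_diff[OF sub x ev[OF x]] even_part_in_V0 odd_part_in_V1 by blast+
    moreover have "x = ev x + (x - ev x)" by simp
    ultimately show ?thesis unfolding ssum_def by blast
  qed
  moreover have "ssum (S \<inter> V0) (S \<inter> V1) \<subseteq> S"
    unfolding ssum_def using V.subspace_add[OF sub] by blast
  ultimately show "graded S" unfolding graded_subspace_def using sub SA by blast
qed

lemma graded_subspace: "graded S \<Longrightarrow> V.subspace S"
  and graded_subset_A: "graded S \<Longrightarrow> S \<subseteq> A"
  unfolding graded_iff by blast+

lemma graded_even: "graded S \<Longrightarrow> x \<in> S \<Longrightarrow> ev x \<in> S \<and> ev x \<in> V0"
  unfolding graded_iff using even_part_in_V0 by blast

lemma graded_odd:
  assumes "graded S" "x \<in> S"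
  shows "x - ev x \<in> S \<and> x - ev x \<in> V1"
proof
  show "x - ev x \<in> S"
    using V.subspace_diff[OF graded_subspace[OF assms(1)] assms(2)] graded_even[OF assms] by blast
  show "x - ev x \<in> V1" using odd_part_in_V1 graded_subset_A assms by blast
qed

lemma graded_A: "graded A"
  unfolding graded_iff using subspace_A even_part_in_A by blast

lemma graded_ssum:
  assumes "graded S" "graded R"
  shows "graded (ssum S R)"
  unfolding graded_iff
proof (intro conjI ballI subsetI)
  show "V.subspace (ssum S R)"
    unfolding ssum_def by (rule V.subspace_sums) (use graded_subspace assms in blast)+
  fix x assume "x \<in> ssum S R"
  then obtain s r where sr: "s \<in> S" "r \<in> R" "x = s + r" unfolding ssum_def by blast
  then have A: "s \<in> A" "r \<in> A" using graded_subset_A assms by blast+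
  then show "x \<in> A" using sr A_add by simp
  have "ev x = ev s + ev r" using even_part_add A sr by simp
  then show "ev x \<in> ssum S R" using graded_even assms sr unfolding ssum_def by blast
qed

definition par_proj :: "bool \<Rightarrow> 'v \<Rightarrow> 'v" where
  "par_proj q x = (if q then x - ev x else ev x)"

lemma par_proj_in_par_part: "x \<in> A \<Longrightarrow> par_proj q x \<in> par_part V0 V1 q"
  unfolding par_proj_def par_part_def using even_part_in_V0 odd_part_in_V1 by simp

lemma par_proj_in_A: "x \<in> A \<Longrightarrow> par_proj q x \<in> A"
  using par_proj_in_par_part par_part_subset_A by blast

lemma par_proj_par_part: "x \<in> par_part V0 V1 q \<Longrightarrow> par_proj q x = x"
  unfolding par_proj_def par_part_def using even_part_V0 even_part_V1 by (cases q) simp_all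

lemma par_proj_add: "x \<in> A \<Longrightarrow> y \<in> A \<Longrightarrow> par_proj q (x + y) = par_proj q x + par_proj q y"
  unfolding par_proj_def using even_part_add by (simp add: algebra_simps)

lemma par_proj_sum: "x \<in> A \<Longrightarrow> x = par_proj q x + par_proj (\<not> q) x"
  unfolding par_proj_def by simp

lemma graded_par_proj: "graded S \<Longrightarrow> x \<in> S \<Longrightarrow> par_proj q x \<in> S"
  unfolding par_proj_def using graded_even graded_odd by simp

lemma homogeneous_in_A: "homogeneous x \<Longrightarrow> x \<in> A"
  using V0_subset_A V1_subset_A unfolding homogeneous_def by blast

lemma homogeneous_par_part: "homogeneous x \<Longrightarrow> \<exists>p. x \<in> par_part V0 V1 p"
  unfolding homogeneous_def par_part_def by (metis (full_types))

lemma graded_homogeneous_split: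
  assumes "graded S" "x \<in> S"
  obtains e d where "x = e + d" "e \<in> S" "d \<in> S" "homogeneous e" "homogeneous d"
proof
  show "x = ev x + (x - ev x)" by simp
  show "ev x \<in> S" "x - ev x \<in> S" "homogeneous (ev x)" "homogeneous (x - ev x)"
    using graded_even[OF assms] graded_odd[OF assms] unfolding homogeneous_def by blast+
qed

end

locale graded_linear_embedding = graded_space sc V0 V1 + W: vector_space sc'
  for sc :: "'k::field \<Rightarrow> 'a::ab_group_add \<Rightarrow> 'a" and V0 V1
    and sc' :: "'k \<Rightarrow> 'b::ab_group_add \<Rightarrow> 'b" +
  fixes f :: "'a \<Rightarrow> 'b"
  assumes f_add: "x \<in> ssum V0 V1 \<Longrightarrow> y \<in> ssum V0 V1 \<Longrightarrow> f (x + y) = f x + f y"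
    and f_scale: "x \<in> ssum V0 V1 \<Longrightarrow> f (sc c x) = sc' c (f x)"
    and f_inj: "inj_on f (ssum V0 V1)"
begin

lemma f_0: "f 0 = 0"
proof -
  have "f 0 = f 0 + f 0" using f_add[OF A_0 A_0] by simp
  then show ?thesis by simp
qed

lemma ssum_image_eq: "ssum (f ` V0) (f ` V1) = f ` A"
  by (rule ssum_image) (use f_add V.subspace_0[OF subspace_V0] V.subspace_0[OF subspace_V1] in auto)

lemma par_part_image: "par_part (f ` V0) (f ` V1) p = f ` par_part V0 V1 p"
  unfolding par_part_def by simp

lemma subspace_image:
  assumes "V.subspace S" "S \<subseteq> A"
  shows "W.subspace (f ` S)"
  unfolding W.subspace_def
proof (intro conjI ballI allI)
  show "0 \<in> f ` S" using f_0 V.subspace_0[OF assms(1)] by force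
  fix x y assume "x \<in> f ` S" "y \<in> f ` S"
  then obtain a b where "a \<in> S" "b \<in> S" "x = f a" "y = f b" by auto
  then show "x + y \<in> f ` S" using f_add assms V.subspace_add[OF assms(1)] by (metis image_eqI subsetD)
next
  fix c x assume "x \<in> f ` S"
  then obtain a where "a \<in> S" "x = f a" by auto
  then show "sc' c x \<in> f ` S" using f_scale assms V.subspace_scale[OF assms(1)] by (metis image_eqI subsetD)
qed

lemma superspace_image: "superspace sc' (f ` V0) (f ` V1)"
  unfolding superspace_def
proof (intro conjI)
  show "W.subspace (f ` V0)" "W.subspace (f ` V1)"
    using subspace_image subspace_V0 subspace_V1 V0_subset_A V1_subset_A by auto
  show "f ` V0 \<inter> f ` V1 = {0}"
    using inj_on_image_Int[OF f_inj V0_subset_A V1_subset_A] V0_Int_V1 f_0 by simp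
  obtain S where S: "finite S" "S \<subseteq> A" "A \<subseteq> V.span S" using finite_spanning by blast
  have "V.subspace {x \<in> A. f x \<in> W.span (f ` S)}"
    unfolding V.subspace_def
  proof (intro conjI ballI allI)
    show "0 \<in> {x \<in> A. f x \<in> W.span (f ` S)}" using A_0 f_0 W.span_zero by simp
    fix x y c assume x: "x \<in> {x \<in> A. f x \<in> W.span (f ` S)}"
    then show "sc c x \<in> {x \<in> A. f x \<in> W.span (f ` S)}" using A_scale f_scale W.span_scale by simp
    assume "y \<in> {x \<in> A. f x \<in> W.span (f ` S)}"
    then show "x + y \<in> {x \<in> A. f x \<in> W.span (f ` S)}" using x A_add f_add W.span_add by simp
  qed
  moreover have "S \<subseteq> {x \<in> A. f x \<in> W.span (f ` S)}" using S W.span_base by auto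
  ultimately have "V.span S \<subseteq> {x \<in> A. f x \<in> W.span (f ` S)}" using V.span_minimal by blast
  then have "f ` A \<subseteq> W.span (f ` S)" using S by blast
  then show "\<exists>S'. finite S' \<and> S' \<subseteq> ssum (f ` V0) (f ` V1) \<and> ssum (f ` V0) (f ` V1) \<subseteq> W.span S'"
    using S unfolding ssum_image_eq by (intro exI[of _ "f ` S"]) auto
qed

lemma super_form_image:
  assumes sf: "super_form sc V0 V1 B"
    and iso: "\<And>x y. x \<in> A \<Longrightarrow> y \<in> A \<Longrightarrow> B' (f x) (f y) = B x y"
  shows "super_form sc' (f ` V0) (f ` V1) B'"
proof -
  have bil: "bilinear_on sc A B" and even: "\<forall>x\<in>V0. \<forall>y\<in>V1. B x y = 0 \<and> B y x = 0"
    and skew: "\<forall>p q. \<forall>x\<in>par_part V0 V1 p. \<forall>y\<in>par_part V0 V1 q. B x y = - (psign p q * B y x)"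
    and nd: "nondeg_on B A"
    using sf unfolding super_form_def by blast+
  have "bilinear_on sc' (f ` A) B'"
    unfolding bilinear_on_def
  proof (intro ballI allI)
    fix u v w c assume "u \<in> f ` A" "v \<in> f ` A" "w \<in> f ` A"
    then obtain x y z where xyz: "x \<in> A" "y \<in> A" "z \<in> A" "u = f x" "v = f y" "w = f z" by auto
    have xy: "x + y \<in> A" "sc c x \<in> A" using xyz A_add A_scale by auto
    have e: "f x + f y = f (x + y)" "sc' c (f x) = f (sc c x)" using xyz f_add f_scale by simp_all
    show "B' (u + v) w = B' u w + B' v w \<and> B' (sc' c u) w = c * B' u w \<and>
          B' w (u + v) = B' w u + B' w v \<and> B' w (sc' c u) = c * B' w u"
      unfolding xyz(4-6) e
      using iso[OF xy(1) xyz(3)] iso[OF xyz(3) xy(1)] iso[OF xy(2) xyz(3)] iso[OF xyz(3) xy(2)]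
        iso[OF xyz(1) xyz(3)] iso[OF xyz(3) xyz(1)] iso[OF xyz(2) xyz(3)] iso[OF xyz(3) xyz(2)]
        bilinear_on_add_left[OF bil xyz(1-3)] bilinear_on_add_right[OF bil xyz(1-3)]
        bilinear_on_scale_left[OF bil xyz(1,3), of c] bilinear_on_scale_right[OF bil xyz(1,3), of c]
      by simp
  qed
  moreover have "\<forall>x\<in>f ` V0. \<forall>y\<in>f ` V1. B' x y = 0 \<and> B' y x = 0"
  proof (intro ballI)
    fix x y assume "x \<in> f ` V0" "y \<in> f ` V1"
    then obtain a b where "a \<in> V0" "b \<in> V1" "x = f a" "y = f b" by blast
    moreover have "a \<in> A" "b \<in> A" using calculation V0_subset_A V1_subset_A by blast+
    ultimately show "B' x y = 0 \<and> B' y x = 0" using even iso by simp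
  qed
  moreover have "\<forall>p q. \<forall>x\<in>par_part (f ` V0) (f ` V1) p. \<forall>y\<in>par_part (f ` V0) (f ` V1) q.
      B' x y = - (psign p q * B' y x)"
  proof (intro allI ballI)
    fix p q x y assume "x \<in> par_part (f ` V0) (f ` V1) p" "y \<in> par_part (f ` V0) (f ` V1) q"
    then obtain a b where "a \<in> par_part V0 V1 p" "b \<in> par_part V0 V1 q" "x = f a" "y = f b"
      unfolding par_part_image by blast
    then show "B' x y = - (psign p q * B' y x)" using skew iso par_part_subset_A by (metis subsetD)
  qed
  moreover have "nondeg_on B' (f ` A)"
    unfolding nondeg_on_def
  proof (intro ballI impI)
    fix u assume "u \<in> f ` A" and u: "\<forall>v\<in>f ` A. B' u v = 0"
    then obtain x where x: "x \<in> A" "u = f x" by blast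
    then have "\<forall>y\<in>A. B x y = 0" using u iso by auto
    then show "u = 0" using nd x f_0 unfolding nondeg_on_def by blast
  qed
  ultimately show ?thesis unfolding super_form_def ssum_image_eq by blast
qed

context
  fixes n :: nat and M :: "'a list \<Rightarrow> 'a" and M' :: "'b list \<Rightarrow> 'b"
  assumes mult: "\<And>as. length as = n \<Longrightarrow> set as \<subseteq> A \<Longrightarrow> M' (map f as) = f (M as)"
begin

lemma nary_on_image:
  assumes na: "nary_on sc A n M"
  shows "nary_on sc' (f ` A) n M'"
  unfolding nary_on_def
proof (intro conjI allI impI)
  fix as' :: "'b list"
  {
    assume h: "length as' = n \<and> set as' \<subseteq> f ` A"
    then have "set as' \<subseteq> f ` A" by blast
    then obtain as where as: "set as \<subseteq> A" "map f as = as'" by (rule map_preimage)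
    moreover have l: "length as = n" using as h by auto
    ultimately have "M' as' = f (M as)" using mult[OF l as(1)] by simp
    then show "M' as' \<in> f ` A" using nary_on_closed[OF na _ as(1)] as h by auto
  }
  fix i x' y' c
  assume h: "length as' = n \<and> set as' \<subseteq> f ` A \<and> i < n \<and> x' \<in> f ` A \<and> y' \<in> f ` A"
  then have "set as' \<subseteq> f ` A" by blast
  then obtain as where as: "set as \<subseteq> A" "map f as = as'" by (rule map_preimage)
  obtain x y where xy: "x \<in> A" "y \<in> A" "x' = f x" "y' = f y" using h by auto
  have l: "length as = n" "i < n" using as h by auto
  have "x + y \<in> A" "sc c x \<in> A" using xy A_add A_scale by simp_all
  then have A: "set (as[i := x]) \<subseteq> A" "set (as[i := y]) \<subseteq> A" "set (as[i := x + y]) \<subseteq> A"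
    "set (as[i := sc c x]) \<subseteq> A"
    using set_update_subset[OF as(1)] xy by simp_all
  have e: "as'[i := x' + y'] = map f (as[i := x + y])" "as'[i := sc' c x'] = map f (as[i := sc c x])"
    "as'[i := x'] = map f (as[i := x])" "as'[i := y'] = map f (as[i := y])"
    using as xy f_add f_scale by (auto simp: map_update)
  have "M (as[i := x + y]) = M (as[i := x]) + M (as[i := y])"
    "M (as[i := sc c x]) = sc c (M (as[i := x]))"
    using nary_on_add[OF na l(1) as(1) l(2) xy(1,2)] nary_on_scale[OF na l(1) as(1) l(2) xy(1)]
    by simp_all
  moreover have "M (as[i := x]) \<in> A" "M (as[i := y]) \<in> A"
    using nary_on_closed[OF na] A l by simp_all
  ultimately show "M' (as'[i := x' + y']) = M' (as'[i := x']) + M' (as'[i := y'])"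
    "M' (as'[i := sc' c x']) = sc' c (M' (as'[i := x']))"
    unfolding e using mult[OF _ A(1)] mult[OF _ A(2)] mult[OF _ A(3)] mult[OF _ A(4)] l f_add f_scale
    by simp_all
qed

lemma commutative_nary_image:
  assumes cm: "commutative_nary sc V0 V1 n M" and na: "nary_on sc A n M"
  shows "commutative_nary sc' (f ` V0) (f ` V1) n M'"
  unfolding commutative_nary_def ssum_image_eq
proof (intro allI impI)
  fix as' :: "'b list" and i p q x' y'
  assume h: "length as' = n \<and> set as' \<subseteq> f ` A \<and> Suc i < n \<and>
    x' \<in> par_part (f ` V0) (f ` V1) p \<and> y' \<in> par_part (f ` V0) (f ` V1) q"
  then have "set as' \<subseteq> f ` A" by blast
  then obtain as where as: "set as \<subseteq> A" "map f as = as'" by (rule map_preimage)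
  obtain x y where xy: "x \<in> par_part V0 V1 p" "y \<in> par_part V0 V1 q" "x' = f x" "y' = f y"
    using h unfolding par_part_image by auto
  have l: "length as = n" using as h by auto
  have "x \<in> A" "y \<in> A" using xy par_part_subset_A by blast+
  then have A: "set (as[i := x, Suc i := y]) \<subseteq> A" "set (as[i := y, Suc i := x]) \<subseteq> A"
    using set_update_subset[OF set_update_subset[OF as(1)]] by simp_all
  have "M (as[i := x, Suc i := y]) = sc (psign p q) (M (as[i := y, Suc i := x]))"
    using commutative_naryD[OF cm l as(1) _ xy(1,2)] h by blast
  moreover have "M (as[i := y, Suc i := x]) \<in> A" using nary_on_closed[OF na] A l by simp
  moreover have "as'[i := x', Suc i := y'] = map f (as[i := x, Suc i := y])"
    "as'[i := y', Suc i := x'] = map f (as[i := y, Suc i := x])"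
    using as xy by (auto simp: map_update)
  ultimately show "M' (as'[i := x', Suc i := y']) = sc' (psign p q) (M' (as'[i := y', Suc i := x']))"
    using mult[OF _ A(1)] mult[OF _ A(2)] l f_scale by simp
qed

lemma invariant_nary_image:
  assumes iv: "invariant_nary V0 V1 n B M" and na: "nary_on sc A n M" and "1 \<le> n"
    and iso: "\<And>x y. x \<in> A \<Longrightarrow> y \<in> A \<Longrightarrow> B' (f x) (f y) = B x y"
  shows "invariant_nary (f ` V0) (f ` V1) n B' M'"
  unfolding invariant_nary_def ssum_image_eq
proof (intro allI impI)
  fix a0' a1' rest' p q
  assume h: "a0' \<in> par_part (f ` V0) (f ` V1) p \<and> a1' \<in> par_part (f ` V0) (f ` V1) q \<and>
    length rest' = n - 1 \<and> set rest' \<subseteq> f ` A"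
  then have "set rest' \<subseteq> f ` A" by blast
  then obtain rest where rest: "set rest \<subseteq> A" "map f rest = rest'" by (rule map_preimage)
  obtain a0 a1 where a: "a0 \<in> par_part V0 V1 p" "a1 \<in> par_part V0 V1 q" "a0' = f a0" "a1' = f a1"
    using h unfolding par_part_image by auto
  have A: "set (a1 # rest) \<subseteq> A" "set (a0 # rest) \<subseteq> A" using a rest par_part_subset_A by auto
  have l: "length (a1 # rest) = n" "length (a0 # rest) = n" using rest h \<open>1 \<le> n\<close> by auto
  have "B a0 (M (a1 # rest)) = psign p q * B a1 (M (a0 # rest))"
    using invariant_naryD[OF iv a(1,2) _ rest(1)] rest h by auto
  moreover have "M (a1 # rest) \<in> A" "M (a0 # rest) \<in> A"
    using nary_on_closed[OF na] A l by blast+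
  moreover have "M' (a1' # rest') = f (M (a1 # rest))" "M' (a0' # rest') = f (M (a0 # rest))"
    using mult[OF l(1) A(1)] mult[OF l(2) A(2)] a rest by simp_all
  ultimately show "B' a0' (M' (a1' # rest')) = psign p q * B' a1' (M' (a0' # rest'))"
    using iso A a by simp
qed

lemma comm_inv_superalg_image:
  assumes "comm_inv_superalg sc V0 V1 n B M" "1 \<le> n"
    and iso: "\<And>x y. x \<in> A \<Longrightarrow> y \<in> A \<Longrightarrow> B' (f x) (f y) = B x y"
  shows "comm_inv_superalg sc' (f ` V0) (f ` V1) n B' M'"
  using assms superspace_image super_form_image nary_on_image commutative_nary_image
    invariant_nary_image
  unfolding comm_inv_superalg_def ssum_image_eq by blast

end

end

locale super_form_space = graded_space sc V0 V1
  for sc :: "'k::field \<Rightarrow> 'v::ab_group_add \<Rightarrow> 'v" and V0 V1 +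
  fixes B :: "'v \<Rightarrow> 'v \<Rightarrow> 'k"
  assumes super_form: "super_form sc V0 V1 B"
begin

lemma bilinear: "bilinear_on sc A B"
  and B_even_odd: "x \<in> V0 \<Longrightarrow> y \<in> V1 \<Longrightarrow> B x y = 0 \<and> B y x = 0"
  and B_skew: "x \<in> par_part V0 V1 p \<Longrightarrow> y \<in> par_part V0 V1 q \<Longrightarrow> B x y = - (psign p q * B y x)"
  and nondeg: "nondeg_on B A"
  using super_form unfolding super_form_def by blast+

lemma B_add_left: "x \<in> A \<Longrightarrow> y \<in> A \<Longrightarrow> z \<in> A \<Longrightarrow> B (x + y) z = B x z + B y z"
  using bilinear_on_add_left[OF bilinear] .
lemma B_add_right: "x \<in> A \<Longrightarrow> y \<in> A \<Longrightarrow> z \<in> A \<Longrightarrow> B z (x + y) = B z x + B z y"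
  using bilinear_on_add_right[OF bilinear] .
lemma B_scale_left: "x \<in> A \<Longrightarrow> z \<in> A \<Longrightarrow> B (sc c x) z = c * B x z"
  using bilinear_on_scale_left[OF bilinear] .
lemma B_scale_right: "x \<in> A \<Longrightarrow> z \<in> A \<Longrightarrow> B z (sc c x) = c * B z x"
  using bilinear_on_scale_right[OF bilinear] .
lemma B_0_left: "z \<in> A \<Longrightarrow> B 0 z = 0"
  using B_scale_left[OF A_0, of z 0] by simp
lemma B_0_right: "z \<in> A \<Longrightarrow> B z 0 = 0"
  using B_scale_right[OF A_0, of z 0] by simp
lemma B_diff_left: "x \<in> A \<Longrightarrow> y \<in> A \<Longrightarrow> z \<in> A \<Longrightarrow> B (x - y) z = B x z - B y z"
  using B_add_left[of "x - y" y z] A_diff by simp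

lemma B_skew_homogeneous:
  assumes x: "x \<in> A" and y: "y \<in> par_part V0 V1 p"
  shows "B x y = - (psign p p * B y x)"
proof -
  have e: "ev x \<in> V0" "x - ev x \<in> V1" using even_part_in_V0 odd_part_in_V1 x by auto
  have yA: "y \<in> A" using y par_part_subset_A by blast
  have "B x y = B (ev x) y + B (x - ev x) y"
    using B_add_left[OF even_part_in_A[OF x] odd_part_in_A[OF x] yA] by simp
  moreover have "B y x = B y (ev x) + B y (x - ev x)"
    using B_add_right[OF even_part_in_A[OF x] odd_part_in_A[OF x] yA] by simp
  moreover have "ev x \<in> par_part V0 V1 False" "x - ev x \<in> par_part V0 V1 True"
    using e unfolding par_part_def by auto
  ultimately show ?thesis
  proof (cases p)
    case True
    then have "y \<in> V1" using y unfolding par_part_def by simp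
    then have "B (ev x) y = 0" "B y (ev x) = 0" using B_even_odd e by auto
    moreover have "B (x - ev x) y = - (psign True True * B y (x - ev x))"
      using B_skew e \<open>y \<in> V1\<close> unfolding par_part_def by (metis (full_types))
    ultimately show ?thesis using True \<open>B x y = _\<close> \<open>B y x = _\<close> by simp
  next
    case False
    then have "y \<in> V0" using y unfolding par_part_def by simp
    then have "B (x - ev x) y = 0" "B y (x - ev x) = 0" using B_even_odd e by auto
    moreover have "B (ev x) y = - (psign False False * B y (ev x))"
      using B_skew e \<open>y \<in> V0\<close> unfolding par_part_def by (metis (full_types))
    ultimately show ?thesis using False \<open>B x y = _\<close> \<open>B y x = _\<close> by simp
  qed
qed

lemma B_skew_homogeneous':
  assumes "x \<in> A" "y \<in> par_part V0 V1 p"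
  shows "B y x = - (psign p p * B x y)"
  using B_skew_homogeneous[OF assms] unfolding psign_def by (cases p) (simp_all add: algebra_simps)

lemma
  assumes S: "graded S" and x: "x \<in> A"
  shows orth_left_imp_right: "\<forall>y\<in>S. B x y = 0 \<Longrightarrow> \<forall>y\<in>S. B y x = 0"
    and orth_right_imp_left: "\<forall>y\<in>S. B y x = 0 \<Longrightarrow> \<forall>y\<in>S. B x y = 0"
proof -
  have parts: "ev y \<in> S" "ev y \<in> par_part V0 V1 False" "y - ev y \<in> S" "y - ev y \<in> par_part V0 V1 True"
    "ev y \<in> A" "y - ev y \<in> A" if "y \<in> S" for y
    using graded_even[OF S that] graded_odd[OF S that] V0_subset_A V1_subset_A
    unfolding par_part_def by auto
  show "\<forall>y\<in>S. B y x = 0" if h: "\<forall>y\<in>S. B x y = 0"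
  proof
    fix y assume y: "y \<in> S"
    have "B y x = B (ev y) x + B (y - ev y) x" using B_add_left[OF parts(5,6)[OF y] x] by simp
    also have "\<dots> = 0"
      using B_skew_homogeneous'[OF x parts(2)[OF y]] B_skew_homogeneous'[OF x parts(4)[OF y]]
        h parts(1,3)[OF y] by simp
    finally show "B y x = 0" .
  qed
  show "\<forall>y\<in>S. B x y = 0" if h: "\<forall>y\<in>S. B y x = 0"
  proof
    fix y assume y: "y \<in> S"
    have "B x y = B x (ev y) + B x (y - ev y)" using B_add_right[OF parts(5,6)[OF y] x] by simp
    also have "\<dots> = 0"
      using B_skew_homogeneous[OF x parts(2)[OF y]] B_skew_homogeneous[OF x parts(4)[OF y]]
        h parts(1,3)[OF y] by simp
    finally show "B x y = 0" .
  qed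
qed

lemma graded_orth:
  assumes S: "graded S" and R: "graded R"
  shows "graded {x \<in> R. \<forall>y\<in>S. B x y = 0}"
  unfolding graded_iff
proof (intro conjI ballI)
  have RA: "R \<subseteq> A" and SA: "S \<subseteq> A" using S R graded_subset_A by auto
  show "{x \<in> R. \<forall>y\<in>S. B x y = 0} \<subseteq> A" using RA by blast
  show "V.subspace {x \<in> R. \<forall>y\<in>S. B x y = 0}"
    unfolding V.subspace_def
  proof (intro conjI ballI allI)
    show "0 \<in> {x \<in> R. \<forall>y\<in>S. B x y = 0}"
      using V.subspace_0[OF graded_subspace[OF R]] B_0_left SA by auto
  next
    fix x y assume "x \<in> {x \<in> R. \<forall>y\<in>S. B x y = 0}" "y \<in> {x \<in> R. \<forall>y\<in>S. B x y = 0}"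
    then show "x + y \<in> {x \<in> R. \<forall>y\<in>S. B x y = 0}"
      using V.subspace_add[OF graded_subspace[OF R]] B_add_left RA SA by (auto simp: subsetD)
  next
    fix c x assume "x \<in> {x \<in> R. \<forall>y\<in>S. B x y = 0}"
    then show "sc c x \<in> {x \<in> R. \<forall>y\<in>S. B x y = 0}"
      using V.subspace_scale[OF graded_subspace[OF R]] B_scale_left RA SA by (auto simp: subsetD)
  qed
  fix x assume x: "x \<in> {x \<in> R. \<forall>y\<in>S. B x y = 0}"
  then have xR: "x \<in> R" and xA: "x \<in> A" and h: "\<forall>y\<in>S. B x y = 0" using RA by auto
  have "B (ev x) y = 0" if y: "y \<in> S" for y
  proof -
    have yA: "y \<in> A" using y SA by auto
    have e: "ev x \<in> V0" "x - ev x \<in> V1" "ev y \<in> V0" "y - ev y \<in> V1"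
      using even_part_in_V0 odd_part_in_V1 xA yA by auto
    have "B (ev x) y = B (ev x) (ev y) + B (ev x) (y - ev y)"
      using B_add_right[OF even_part_in_A[OF yA] odd_part_in_A[OF yA] even_part_in_A[OF xA]] by simp
    also have "\<dots> = B (ev x) (ev y)" using B_even_odd e by simp
    also have "\<dots> = B x (ev y) - B (x - ev x) (ev y)"
      using B_diff_left[OF xA odd_part_in_A[OF xA] even_part_in_A[OF yA]] by simp
    also have "\<dots> = 0" using h graded_even[OF S y] B_even_odd e by simp
    finally show ?thesis .
  qed
  then show "ev x \<in> {x \<in> R. \<forall>y\<in>S. B x y = 0}" using graded_even[OF R xR] by simp
qed

lemma B_par_proj:
  assumes "x \<in> A" "y \<in> A"
  shows "B (par_proj q x) y = B x (par_proj q y)"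
proof -
  have zero: "B (par_proj q' u) (par_proj (\<not> q') v) = 0" if "u \<in> A" "v \<in> A" for q' u v
    using B_even_odd par_proj_in_par_part[OF that(1), of q'] par_proj_in_par_part[OF that(2), of "\<not> q'"]
    unfolding par_part_def by (cases q') auto
  have "B (par_proj q x) y = B (par_proj q x) (par_proj q y) + B (par_proj q x) (par_proj (\<not> q) y)"
    using B_add_right[OF par_proj_in_A[OF assms(2)] par_proj_in_A[OF assms(2)] par_proj_in_A[OF assms(1)]]
      par_proj_sum[OF assms(2), of q] by metis
  also have "\<dots> = B (par_proj q x) (par_proj q y) + B (par_proj (\<not> q) x) (par_proj q y)"
    using zero[OF assms, of q] zero[OF assms, of "\<not> q"] by simp
  also have "\<dots> = B x (par_proj q y)"
    using B_add_left[OF par_proj_in_A[OF assms(1)] par_proj_in_A[OF assms(1)] par_proj_in_A[OF assms(2)]]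
      par_proj_sum[OF assms(1), of q] by metis
  finally show ?thesis .
qed

lemma orth_spanning_zero:
  assumes x: "x \<in> A" and S: "S \<subseteq> A" "A \<subseteq> V.span S" and orth: "\<forall>b\<in>S. B x b = 0"
  shows "x = 0"
proof -
  have "V.subspace {w \<in> A. B x w = 0}"
    unfolding V.subspace_def
  proof (intro conjI ballI allI)
    show "0 \<in> {w \<in> A. B x w = 0}" using A_0 B_0_right[OF x] by simp
    fix u v c assume u: "u \<in> {w \<in> A. B x w = 0}"
    then show "sc c u \<in> {w \<in> A. B x w = 0}" using A_scale B_scale_right[OF _ x, of u c] by simp
    assume "v \<in> {w \<in> A. B x w = 0}"
    then show "u + v \<in> {w \<in> A. B x w = 0}" using u A_add B_add_right[OF _ _ x, of u v] by simp
  qed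
  moreover have "S \<subseteq> {w \<in> A. B x w = 0}" using S(1) orth by blast
  ultimately have "V.span S \<subseteq> {w \<in> A. B x w = 0}" by (intro V.span_minimal)
  then have "\<forall>w\<in>A. B x w = 0" using S(2) by blast
  then show ?thesis using nondeg x unfolding nondeg_on_def by blast
qed

end

locale comm_inv_algebra = V: vector_space sc
  for sc :: "'k::field \<Rightarrow> 'v::ab_group_add \<Rightarrow> 'v" +
  fixes V0 V1 :: "'v set" and n :: nat and B :: "'v \<Rightarrow> 'v \<Rightarrow> 'k" and M :: "'v list \<Rightarrow> 'v"
  assumes comm_inv: "comm_inv_superalg sc V0 V1 n B M" and arity_pos: "1 \<le> n"

sublocale comm_inv_algebra \<subseteq> super_form_space sc V0 V1 B
  using comm_inv unfolding comm_inv_superalg_def by unfold_locales blast+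

context comm_inv_algebra
begin

definition T :: "'v list \<Rightarrow> 'k" where
  "T as = B (hd as) (M (tl as))"

lemma nary: "nary_on sc A n M"
  and commutative: "commutative_nary sc V0 V1 n M"
  and invariant: "invariant_nary V0 V1 n B M"
  using comm_inv unfolding comm_inv_superalg_def by blast+

lemma M_closed: "length as = n \<Longrightarrow> set as \<subseteq> A \<Longrightarrow> M as \<in> A"
  using nary_on_closed[OF nary] .

lemma M_add: "length as = n \<Longrightarrow> set as \<subseteq> A \<Longrightarrow> i < n \<Longrightarrow> x \<in> A \<Longrightarrow> y \<in> A \<Longrightarrow>
    M (as[i := x + y]) = M (as[i := x]) + M (as[i := y])"
  using nary_on_add[OF nary] .

lemma M_scale: "length as = n \<Longrightarrow> set as \<subseteq> A \<Longrightarrow> i < n \<Longrightarrow> x \<in> A \<Longrightarrow>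
    M (as[i := sc c x]) = sc c (M (as[i := x]))"
  using nary_on_scale[OF nary] .

lemma M_swap_adjacent:
  assumes "length as = n" "set as \<subseteq> A" "Suc i < n" "homogeneous (as ! i)" "homogeneous (as ! Suc i)"
  shows "\<exists>s. M as = sc s (M (swap_adjacent i as))"
proof -
  obtain p q where "as ! i \<in> par_part V0 V1 p" "as ! Suc i \<in> par_part V0 V1 q"
    using homogeneous_par_part assms by blast
  then have "M (as[i := as ! i, Suc i := as ! Suc i]) = sc (psign p q) (M (swap_adjacent i as))"
    unfolding swap_adjacent_def by (rule commutative_naryD[OF commutative assms(1-3)])
  then show ?thesis by auto
qed

lemma M_in_subspace_if_moved_last:
  assumes S: "V.subspace S" and as: "length as = n" "set as \<subseteq> A" "\<forall>x\<in>set as. homogeneous x"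
    and k: "k < n" and last: "M (remove_nth k as @ [as ! k]) \<in> S"
  shows "M as \<in> S"
proof -
  have "M as \<in> S" if "k + m = n - 1" "length as = n" "set as \<subseteq> A" "\<forall>x\<in>set as. homogeneous x"
    "M (remove_nth k as @ [as ! k]) \<in> S" for m k as
    using that
  proof (induction m arbitrary: k as)
    case 0
    then have "Suc k = length as" using arity_pos by simp
    then have "remove_nth k as @ [as ! k] = as"
      unfolding remove_nth_def by (metis append_Nil2 drop_all lessI order_refl take_Suc_conv_app_nth take_all)
    then show ?case using "0.prems" by simp
  next
    case (Suc m)
    have kn: "Suc k < length as" using Suc.prems(1,2) arity_pos by linarith
    define as' where "as' = swap_adjacent k as"
    have "set as' \<subseteq> set as" using set_swap_adjacent[OF kn] unfolding as'_def .
    moreover have "remove_nth (Suc k) as' @ [as' ! Suc k] = remove_nth k as @ [as ! k]"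
      unfolding as'_def using remove_nth_swap_adjacent(2)[OF kn] nth_Suc_swap_adjacent[OF kn] by simp
    ultimately have "M as' \<in> S" using Suc.IH[of "Suc k" as'] Suc.prems unfolding as'_def by auto
    moreover obtain s where "M as = sc s (M as')"
      using M_swap_adjacent[of as k] Suc.prems kn unfolding as'_def by (metis Suc_lessD nth_mem)
    ultimately show ?case using V.subspace_scale[OF S] by simp
  qed
  moreover have "k + (n - 1 - k) = n - 1" using k by simp
  ultimately show ?thesis using as last by blast
qed

lemma multilinear_reduce_to_homogeneous:
  fixes F :: "'v list \<Rightarrow> 'w::monoid_add"
  assumes F_add: "\<And>as j x y. length as = N \<Longrightarrow> set as \<subseteq> A \<Longrightarrow> j < N \<Longrightarrow> x \<in> A \<Longrightarrow> y \<in> A \<Longrightarrow>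
      F (as[j := x + y]) = F (as[j := x]) + F (as[j := y])"
    and P_add: "\<And>u v. P u \<Longrightarrow> P v \<Longrightarrow> P (u + v)"
    and S: "\<And>j. j < N \<Longrightarrow> graded (S j)"
    and homogeneous_case:
      "\<And>as. length as = N \<Longrightarrow> \<forall>j<N. as ! j \<in> S j \<and> homogeneous (as ! j) \<Longrightarrow> P (F as)"
    and as: "length as = N" "\<forall>j<N. as ! j \<in> S j"
  shows "P (F as)"
proof -
  have "P (F as)"
    if "length as = N" "\<forall>j<N. as ! j \<in> S j" "\<forall>j<N. k \<le> j \<longrightarrow> homogeneous (as ! j)" for k as
    using that
  proof (induction k arbitrary: as)
    case 0
    then show ?case using homogeneous_case by auto
  next
    case (Suc k)
    show ?case
    proof (cases "k < N")
      case False
      then show ?thesis using Suc by auto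
    next
      case True
      have Sk: "graded (S k)" and ak: "as ! k \<in> S k" using S Suc.prems True by auto
      have setA: "set as \<subseteq> A"
        using Suc.prems(1,2) S graded_subset_A by (intro set_subset_of_nth) blast
      obtain e d where ed: "as ! k = e + d" "e \<in> S k" "d \<in> S k" "homogeneous e" "homogeneous d"
        by (rule graded_homogeneous_split[OF Sk ak])
      have update: "P (F (as[k := z]))" if z: "z \<in> S k" "homogeneous z" for z
      proof (rule Suc.IH)
        show "length (as[k := z]) = N" using Suc.prems by simp
        show "\<forall>j<N. as[k := z] ! j \<in> S j"
          using Suc.prems(1,2) z(1) True by (auto simp: nth_list_update)
        show "\<forall>j<N. k \<le> j \<longrightarrow> homogeneous (as[k := z] ! j)"
          using Suc.prems(1,3) z(2) by (auto simp: nth_list_update le_eq_less_or_eq Suc_le_eq)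
      qed
      have "e \<in> A" "d \<in> A" using ed Sk graded_subset_A by blast+
      then have "F (as[k := e + d]) = F (as[k := e]) + F (as[k := d])"
        by (rule F_add[OF Suc.prems(1) setA True])
      then have "F as = F (as[k := e]) + F (as[k := d])" using ed(1) by (metis list_update_id)
      then show ?thesis using P_add update ed by simp
    qed
  qed
  from this[of as N] show ?thesis using as by simp
qed

lemma T_add:
  assumes "length as = Suc n" "set as \<subseteq> A" "j < Suc n" "x \<in> A" "y \<in> A"
  shows "T (as[j := x + y]) = T (as[j := x]) + T (as[j := y])"
proof -
  obtain a0 rest where as: "as = a0 # rest" using assms(1) by (cases as) auto
  have r: "length rest = n" "set rest \<subseteq> A" "a0 \<in> A" using assms as by auto
  show ?thesis
  proof (cases j)
    case 0
    then show ?thesis using as r assms B_add_left M_closed unfolding T_def by simp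
  next
    case (Suc j')
    have "M (rest[j' := x + y]) = M (rest[j' := x]) + M (rest[j' := y])"
      using M_add r assms Suc by simp
    moreover have "M (rest[j' := x]) \<in> A" "M (rest[j' := y]) \<in> A"
      using M_closed[of "rest[j' := x]"] M_closed[of "rest[j' := y]"] set_update_subset[OF r(2)]
        r(1) assms(4,5) by simp_all
    ultimately show ?thesis using as Suc B_add_right r unfolding T_def by simp
  qed
qed

lemma T_eq_0_if_swap_adjacent_eq_0:
  assumes as: "length as = Suc n" "set as \<subseteq> A" "\<forall>x\<in>set as. homogeneous x"
    and i: "i < n" and swapped: "T (swap_adjacent i as) = 0"
  shows "T as = 0"
proof (cases i)
  case 0
  obtain a0 r where "as = a0 # r" using as(1) by (cases as) auto
  moreover obtain a1 rest where "r = a1 # rest" using as(1) arity_pos calculation by (cases r) auto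
  ultimately have as_eq: "as = a0 # a1 # rest" by simp
  obtain p q where pq: "a0 \<in> par_part V0 V1 p" "a1 \<in> par_part V0 V1 q"
    using homogeneous_par_part as(3) as_eq by (metis list.set_intros(1) list.set_intros(2))
  have "B a0 (M (a1 # rest)) = psign p q * B a1 (M (a0 # rest))"
    by (rule invariant_naryD[OF invariant pq]) (use as as_eq in auto)
  then show ?thesis using swapped as_eq 0 unfolding T_def by (simp add: swap_adjacent_0)
next
  case (Suc i')
  obtain a0 rest where as_eq: "as = a0 # rest" using as(1) by (cases as) auto
  have r: "length rest = n" "set rest \<subseteq> A" "\<forall>x\<in>set rest. homogeneous x" using as as_eq by auto
  have i': "Suc i' < n" using i Suc by simp
  then obtain s where s: "M rest = sc s (M (swap_adjacent i' rest))"
    using M_swap_adjacent[OF r(1,2)] r(3) r(1) by (metis Suc_lessD nth_mem)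
  have "M (swap_adjacent i' rest) \<in> A"
    using M_closed r set_swap_adjacent[of i' rest] i' by auto
  then have "T as = s * T (swap_adjacent i as)"
    using s as_eq Suc r as B_scale_right unfolding T_def by (simp add: swap_adjacent_Cons)
  then show ?thesis using swapped by simp
qed

lemma T_eq_0_if_moved_first_eq_0:
  assumes "length as = Suc n" "set as \<subseteq> A" "\<forall>x\<in>set as. homogeneous x" "j \<le> n"
    and "T (as ! j # remove_nth j as) = 0"
  shows "T as = 0"
  using assms
proof (induction j arbitrary: as)
  case 0
  then have "as ! 0 # remove_nth 0 as = as" unfolding remove_nth_def by (cases as) auto
  then show ?case using "0.prems"(5) by simp
next
  case (Suc j)
  have j: "Suc j < length as" using Suc.prems by simp
  define as' where "as' = swap_adjacent j as"
  have sub: "set as' \<subseteq> set as" using set_swap_adjacent[OF j] unfolding as'_def .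
  have "T as' = 0"
  proof (rule Suc.IH)
    show "length as' = Suc n" using Suc.prems(1) unfolding as'_def by simp
    show "set as' \<subseteq> A" using sub Suc.prems(2) by blast
    show "\<forall>x\<in>set as'. homogeneous x" using sub Suc.prems(3) by blast
    show "j \<le> n" using Suc.prems(4) by simp
    have "as' ! j # remove_nth j as' = as ! Suc j # remove_nth (Suc j) as"
      unfolding as'_def using nth_swap_adjacent[OF j] remove_nth_swap_adjacent(1)[OF j] by simp
    then show "T (as' ! j # remove_nth j as') = 0" using Suc.prems(5) by simp
  qed
  moreover have "j < n" using Suc.prems(4) by simp
  ultimately show ?case
    using T_eq_0_if_swap_adjacent_eq_0[OF Suc.prems(1-3)] unfolding as'_def by blast
qed

lemma T_vanishes_on_graded_blocks:
  assumes S: "\<And>j. j \<le> n \<Longrightarrow> graded (S j)" and k: "k \<le> n"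
    and moved: "\<And>as. length as = Suc n \<Longrightarrow> \<forall>j\<le>n. as ! j \<in> S j \<and> homogeneous (as ! j) \<Longrightarrow>
        T (as ! k # remove_nth k as) = 0"
    and as: "length as = Suc n" "\<forall>j\<le>n. as ! j \<in> S j"
  shows "T as = 0"
proof (rule multilinear_reduce_to_homogeneous[where N = "Suc n" and F = T and P = "\<lambda>t. t = 0" and S = S])
  show "\<And>as j x y. length as = Suc n \<Longrightarrow> set as \<subseteq> A \<Longrightarrow> j < Suc n \<Longrightarrow> x \<in> A \<Longrightarrow> y \<in> A \<Longrightarrow>
      T (as[j := x + y]) = T (as[j := x]) + T (as[j := y])" by (rule T_add)
  show "\<And>u v. u = 0 \<Longrightarrow> v = 0 \<Longrightarrow> u + v = (0::'k)" by simp
  show "\<And>j. j < Suc n \<Longrightarrow> graded (S j)" using S by simp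
  show "length as = Suc n" "\<forall>j<Suc n. as ! j \<in> S j" using as by auto
next
  fix as :: "'v list" assume h: "length as = Suc n" "\<forall>j<Suc n. as ! j \<in> S j \<and> homogeneous (as ! j)"
  have "set as \<subseteq> A" "\<forall>x\<in>set as. homogeneous x"
    using h by (auto simp: in_set_conv_nth homogeneous_in_A)
  then show "T as = 0"
    using T_eq_0_if_moved_first_eq_0[OF h(1)] moved[OF h(1)] h k by auto
qed

lemma ideal_absorbs_any_slot:
  assumes J: "is_ideal sc V0 V1 n M J" and rs: "length rs = n" "set rs \<subseteq> A"
    and k: "k < n" "rs ! k \<in> J"
  shows "M rs \<in> J"
proof -
  have g: "graded J" using J unfolding is_ideal_def by blast
  have absorbs_last: "\<And>as. length as = n \<Longrightarrow> set (butlast as) \<subseteq> A \<Longrightarrow> last as \<in> J \<Longrightarrow> M as \<in> J"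
    using J unfolding is_ideal_def by blast
  define S where "S j = (if j = k then J else A)" for j
  show ?thesis
  proof (rule multilinear_reduce_to_homogeneous[where N = n and F = M and P = "\<lambda>z. z \<in> J" and S = S])
    show "\<And>as j x y. length as = n \<Longrightarrow> set as \<subseteq> A \<Longrightarrow> j < n \<Longrightarrow> x \<in> A \<Longrightarrow> y \<in> A \<Longrightarrow>
      M (as[j := x + y]) = M (as[j := x]) + M (as[j := y])" by (rule M_add)
    show "\<And>u v. u \<in> J \<Longrightarrow> v \<in> J \<Longrightarrow> u + v \<in> J" using V.subspace_add graded_subspace[OF g] by blast
    show "\<And>j. j < n \<Longrightarrow> graded (S j)" using g graded_A unfolding S_def by auto
    show "length rs = n" by fact
    show "\<forall>j<n. rs ! j \<in> S j" using rs k unfolding S_def by (auto simp: subsetD)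
  next
    fix as :: "'v list" assume h: "length as = n" "\<forall>j<n. as ! j \<in> S j \<and> homogeneous (as ! j)"
    have as: "set as \<subseteq> A" "\<forall>x\<in>set as. homogeneous x"
      using h by (auto simp: in_set_conv_nth homogeneous_in_A)
    have "set (butlast (remove_nth k as @ [as ! k])) \<subseteq> A"
      using as(1) set_remove_nth_subset[of k as] by simp
    moreover have "last (remove_nth k as @ [as ! k]) \<in> J"
      using spec[OF h(2), of k] k(1) unfolding S_def by simp
    ultimately have "M (remove_nth k as @ [as ! k]) \<in> J"
      using absorbs_last h(1) k by simp
    then show "M as \<in> J"
      using M_in_subspace_if_moved_last[OF graded_subspace[OF g] h(1) as k(1)] by blast
  qed
qed

lemma is_ideal_ssum:
  assumes J1: "is_ideal sc V0 V1 n M J1" and J2: "is_ideal sc V0 V1 n M J2"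
  shows "is_ideal sc V0 V1 n M (ssum J1 J2)"
  unfolding is_ideal_def
proof (intro conjI allI impI)
  have g: "graded J1" "graded J2" using J1 J2 unfolding is_ideal_def by blast+
  show "graded (ssum J1 J2)" using graded_ssum[OF g] .
  fix as :: "'v list"
  assume h: "length as = n \<and> set (butlast as) \<subseteq> A \<and> last as \<in> ssum J1 J2"
  obtain a b where ab: "a \<in> J1" "b \<in> J2" "last as = a + b" using h unfolding ssum_def by blast
  have abA: "a \<in> A" "b \<in> A" using ab g graded_subset_A by blast+
  define bs where "bs = butlast as"
  have "as \<noteq> []" using h arity_pos by auto
  then have as_eq: "as = bs @ [a + b]" using append_butlast_last_id ab(3) unfolding bs_def by metis
  have bs: "length bs = n - 1" "set bs \<subseteq> A" using h unfolding bs_def by simp_all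
  have upd: "(bs @ [a])[n - 1 := z] = bs @ [z]" for z using bs by (simp add: list_update_append)
  have "M as = M ((bs @ [a])[n - 1 := a + b])" by (simp only: as_eq upd)
  also have "\<dots> = M ((bs @ [a])[n - 1 := a]) + M ((bs @ [a])[n - 1 := b])"
    by (rule M_add) (use bs abA arity_pos in auto)
  also have "\<dots> = M (bs @ [a]) + M (bs @ [b])" by (simp only: upd)
  finally have "M as = M (bs @ [a]) + M (bs @ [b])" .
  moreover have "M (bs @ [a]) \<in> J1" "M (bs @ [b]) \<in> J2"
    using J1[unfolded is_ideal_def] J2[unfolded is_ideal_def] bs ab(1,2) arity_pos
    by (simp_all add: butlast_append)
  ultimately show "M as \<in> ssum J1 J2" unfolding ssum_def by blast
qed

lemma is_ideal_orth:
  assumes J: "is_ideal sc V0 V1 n M J"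
  shows "is_ideal sc V0 V1 n M {x \<in> A. \<forall>y\<in>J. B x y = 0}" (is "is_ideal _ _ _ _ _ ?Jp")
  unfolding is_ideal_def
proof (intro conjI allI impI)
  have gJ: "graded J" using J unfolding is_ideal_def by blast
  have gJp: "graded ?Jp" using graded_orth[OF gJ graded_A] .
  show "graded ?Jp" by (fact gJp)
  fix as :: "'v list"
  assume h: "length as = n \<and> set (butlast as) \<subseteq> A \<and> last as \<in> ?Jp"
  have as: "as \<noteq> []" "length as = n" using h arity_pos by auto
  have asA: "set as \<subseteq> A"
  proof
    fix x assume "x \<in> set as"
    then have "x \<in> set (butlast as @ [last as])" using append_butlast_last_id[OF as(1)] by simp
    then show "x \<in> A" using h by auto
  qed
  have MA: "M as \<in> A" using M_closed as asA by blast
  have "B y (M as) = 0" if y: "y \<in> J" for y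
  proof -
    define S where "S j = (if j = 0 then J else if j = n then ?Jp else A)" for j
    have "T (y # as) = 0"
    proof (rule T_vanishes_on_graded_blocks[where S = S and k = n])
      show "\<And>j. j \<le> n \<Longrightarrow> graded (S j)" unfolding S_def using gJ gJp graded_A by auto
      show "n \<le> n" by simp
      show "length (y # as) = Suc n" using as by simp
      show "\<forall>j\<le>n. (y # as) ! j \<in> S j"
      proof (intro allI impI)
        fix j assume j: "j \<le> n"
        show "(y # as) ! j \<in> S j"
        proof (cases j)
          case 0
          then show ?thesis using y arity_pos unfolding S_def by simp
        next
          case (Suc j')
          then have "as ! j' \<in> A" using j as asA by (simp add: subsetD)
          moreover have "as ! j' = last as" if "j = n"
          proof -
            have "j' = length as - 1" using that Suc as by simp
            then show ?thesis using as(1) by (simp add: last_conv_nth)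
          qed
          ultimately show ?thesis using Suc h unfolding S_def by auto
        qed
      qed
    next
      fix cs :: "'v list" assume c: "length cs = Suc n" "\<forall>j\<le>n. cs ! j \<in> S j \<and> homogeneous (cs ! j)"
      have "M (take n cs) \<in> J"
      proof (rule ideal_absorbs_any_slot[OF J, where k = 0])
        show "length (take n cs) = n" using c by simp
        show "set (take n cs) \<subseteq> A"
          using c by (auto simp: in_set_conv_nth homogeneous_in_A)
        show "0 < n" using arity_pos by simp
        show "take n cs ! 0 \<in> J" using c arity_pos unfolding S_def by auto
      qed
      moreover have "cs ! n \<in> ?Jp" using c arity_pos unfolding S_def by auto
      moreover have "remove_nth n cs = take n cs" unfolding remove_nth_def using c by simp
      ultimately show "T (cs ! n # remove_nth n cs) = 0" unfolding T_def by simp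
    qed
    then show ?thesis unfolding T_def by simp
  qed
  then have "\<forall>y\<in>J. B (M as) y = 0" using orth_right_imp_left[OF gJ MA] by blast
  then show "M as \<in> ?Jp" using MA by blast
qed

lemma comm_inv_superalg_compression:
  assumes G: "graded G" and nondeg_G: "nondeg_on B G"
    and P_in: "\<And>x. x \<in> A \<Longrightarrow> P x \<in> G"
    and P_add: "\<And>x y. x \<in> A \<Longrightarrow> y \<in> A \<Longrightarrow> P (x + y) = P x + P y"
    and P_scale: "\<And>x c. x \<in> A \<Longrightarrow> P (sc c x) = sc c (P x)"
    and P_adj: "\<And>g x. g \<in> G \<Longrightarrow> x \<in> A \<Longrightarrow> B g (P x) = B g x"
  shows "comm_inv_superalg sc (G \<inter> V0) (G \<inter> V1) n B (\<lambda>as. P (M as))"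
proof -
  have ssG: "ssum (G \<inter> V0) (G \<inter> V1) = G" using G unfolding graded_subspace_def by blast
  have GA: "G \<subseteq> A" using graded_subset_A[OF G] .
  have par_G: "par_part (G \<inter> V0) (G \<inter> V1) p \<subseteq> par_part V0 V1 p \<inter> G" for p
    unfolding par_part_def by auto
  have "superspace sc (G \<inter> V0) (G \<inter> V1)"
    unfolding superspace_def ssG
  proof (intro conjI)
    show "V.subspace (G \<inter> V0)" "V.subspace (G \<inter> V1)"
      using V.subspace_inter graded_subspace[OF G] subspace_V0 subspace_V1 by auto
    show "G \<inter> V0 \<inter> (G \<inter> V1) = {0}"
      using V0_Int_V1 V.subspace_0[OF graded_subspace[OF G]] by auto
    obtain E where E: "E \<subseteq> G" "V.independent E" "G \<subseteq> V.span E"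
      by (rule V.basis_exists[of G]) blast
    obtain S where S: "finite S" "S \<subseteq> A" "A \<subseteq> V.span S" using finite_spanning by blast
    have "finite E" using V.independent_span_bound[OF S(1) E(2)] E(1) GA S(3) by blast
    then show "\<exists>S. finite S \<and> S \<subseteq> G \<and> G \<subseteq> V.span S" using E by blast
  qed
  moreover have "super_form sc (G \<inter> V0) (G \<inter> V1) B"
    unfolding super_form_def ssG
  proof (intro conjI)
    show "bilinear_on sc G B" using bilinear GA unfolding bilinear_on_def by blast
    show "\<forall>x\<in>G \<inter> V0. \<forall>y\<in>G \<inter> V1. B x y = 0 \<and> B y x = 0" using B_even_odd by blast
    show "\<forall>p q. \<forall>x\<in>par_part (G \<inter> V0) (G \<inter> V1) p. \<forall>y\<in>par_part (G \<inter> V0) (G \<inter> V1) q.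
        B x y = - (psign p q * B y x)"
      using B_skew par_G by blast
  qed (fact nondeg_G)
  moreover have "nary_on sc G n (\<lambda>as. P (M as))"
    unfolding nary_on_def
  proof (intro conjI allI impI)
    fix as :: "'v list" assume "length as = n \<and> set as \<subseteq> G"
    then show "P (M as) \<in> G" using P_in M_closed GA by blast
  next
    fix as :: "'v list" and i x y c assume h: "length as = n \<and> set as \<subseteq> G \<and> i < n \<and> x \<in> G \<and> y \<in> G"
    then have hA: "length as = n" "set as \<subseteq> A" "i < n" "x \<in> A" "y \<in> A" using GA by blast+
    have MA: "M (as[i := x]) \<in> A" "M (as[i := y]) \<in> A"
      using M_closed set_update_subset[OF hA(2)] hA by simp_all
    show "P (M (as[i := x + y])) = P (M (as[i := x])) + P (M (as[i := y]))"
      using M_add[OF hA] P_add[OF MA] by simp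
    show "P (M (as[i := sc c x])) = sc c (P (M (as[i := x])))"
      using M_scale[OF hA(1-4)] P_scale[OF MA(1)] by simp
  qed
  moreover have "commutative_nary sc (G \<inter> V0) (G \<inter> V1) n (\<lambda>as. P (M as))"
    unfolding commutative_nary_def ssG
  proof (intro allI impI)
    fix as :: "'v list" and i p q x y
    assume h: "length as = n \<and> set as \<subseteq> G \<and> Suc i < n \<and> x \<in> par_part (G \<inter> V0) (G \<inter> V1) p \<and>
      y \<in> par_part (G \<inter> V0) (G \<inter> V1) q"
    then have xy: "x \<in> par_part V0 V1 p" "y \<in> par_part V0 V1 q" "set as \<subseteq> A" using par_G GA by blast+
    have "x \<in> A" "y \<in> A" using xy(1,2) par_part_subset_A by blast+
    then have "set (as[i := y, Suc i := x]) \<subseteq> A"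
      using set_update_subset[OF set_update_subset[OF xy(3)]] by blast
    then have "M (as[i := y, Suc i := x]) \<in> A" using M_closed h by simp
    then show "P (M (as[i := x, Suc i := y])) = sc (psign p q) (P (M (as[i := y, Suc i := x])))"
      using commutative_naryD[OF commutative _ xy(3) _ xy(1,2)] h P_scale by simp
  qed
  moreover have "invariant_nary (G \<inter> V0) (G \<inter> V1) n B (\<lambda>as. P (M as))"
    unfolding invariant_nary_def ssG
  proof (intro allI impI)
    fix a0 a1 rest p q
    assume h: "a0 \<in> par_part (G \<inter> V0) (G \<inter> V1) p \<and> a1 \<in> par_part (G \<inter> V0) (G \<inter> V1) q \<and>
      length rest = n - 1 \<and> set rest \<subseteq> G"
    then have a: "a0 \<in> par_part V0 V1 p" "a1 \<in> par_part V0 V1 q" "a0 \<in> G" "a1 \<in> G" "set rest \<subseteq> A"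
      using par_G GA by blast+
    have "M (a1 # rest) \<in> A" "M (a0 # rest) \<in> A"
      using M_closed a h arity_pos GA by auto
    then show "B a0 (P (M (a1 # rest))) = psign p q * B a1 (P (M (a0 # rest)))"
      using invariant_naryD[OF invariant a(1,2) _ a(5)] h P_adj a(3,4) by simp
  qed
  ultimately show ?thesis unfolding comm_inv_superalg_def ssG by blast
qed

end

locale double_extension_setting = comm_inv_algebra sc V0 V1 n B M
  for sc :: "'k::field \<Rightarrow> 'v::ab_group_add \<Rightarrow> 'v" and V0 V1 n B M +
  fixes I H :: "'v set"
  assumes irreducible: "irreducible_alg sc V0 V1 n B M"
    and maximal: "maximal_nontrivial_ideal sc V0 V1 n M I"
    and subalgebra: "is_subalgebra sc V0 V1 n M H"
    and isotropic: "isotropic B H"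
    and I_Int_H: "I \<inter> H = {0}" and I_plus_H: "ssum I H = ssum V0 V1"
begin

definition Iperp :: "'v set" where
  "Iperp = {x \<in> A. \<forall>y\<in>I. B x y = 0}"

definition G :: "'v set" where
  "G = {x \<in> I. \<forall>y\<in>H. B x y = 0}"

lemma I_ideal: "is_ideal sc V0 V1 n M I" and I_ne_0: "I \<noteq> {0}" and I_ne_A: "I \<noteq> A"
  and I_maximal: "\<And>J. is_ideal sc V0 V1 n M J \<Longrightarrow> I \<subseteq> J \<Longrightarrow> J \<noteq> A \<Longrightarrow> J = I"
  using maximal unfolding maximal_nontrivial_ideal_def by blast+

lemma graded_I: "graded I" using I_ideal unfolding is_ideal_def by blast
lemma graded_H: "graded H" using subalgebra unfolding is_subalgebra_def by blast
lemma H_closed: "length hs = n \<Longrightarrow> set hs \<subseteq> H \<Longrightarrow> M hs \<in> H"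
  using subalgebra unfolding is_subalgebra_def by blast
lemma B_H_H: "x \<in> H \<Longrightarrow> y \<in> H \<Longrightarrow> B x y = 0"
  using isotropic unfolding isotropic_def by blast
lemma I_subset_A: "I \<subseteq> A" using graded_subset_A[OF graded_I] .
lemma H_subset_A: "H \<subseteq> A" using graded_subset_A[OF graded_H] .

lemma graded_Iperp: "graded Iperp"
  unfolding Iperp_def using graded_orth[OF graded_I graded_A] .
lemma graded_G: "graded G"
  unfolding G_def using graded_orth[OF graded_H graded_I] .
lemma subspace_G: "V.subspace G" and subspace_H: "V.subspace H" and subspace_I: "V.subspace I"
  and subspace_Iperp: "V.subspace Iperp"
  using graded_subspace graded_G graded_H graded_I graded_Iperp by blast+

lemma Iperp_subset_A: "Iperp \<subseteq> A" unfolding Iperp_def by blast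
lemma G_subset_I: "G \<subseteq> I" unfolding G_def by blast
lemma G_subset_A: "G \<subseteq> A" using G_subset_I I_subset_A by blast

lemma B_Iperp_I: "x \<in> Iperp \<Longrightarrow> y \<in> I \<Longrightarrow> B x y = 0"
  unfolding Iperp_def by blast
lemma B_I_Iperp: "x \<in> Iperp \<Longrightarrow> y \<in> I \<Longrightarrow> B y x = 0"
  using orth_left_imp_right[OF graded_I] unfolding Iperp_def by blast
lemma B_G_H: "x \<in> G \<Longrightarrow> y \<in> H \<Longrightarrow> B x y = 0"
  unfolding G_def by blast
lemma B_H_G: "x \<in> G \<Longrightarrow> y \<in> H \<Longrightarrow> B y x = 0"
  using orth_left_imp_right[OF graded_H] G_subset_A unfolding G_def by blast

lemma Iperp_ideal: "is_ideal sc V0 V1 n M Iperp"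
  unfolding Iperp_def by (rule is_ideal_orth[OF I_ideal])

lemma orth_split_if_I_plus_Iperp:
  assumes span: "ssum I Iperp = A"
  shows "I \<inter> Iperp = {0}" and "nondeg_on B I" and "nondeg_on B Iperp"
proof -
  have nd: "x = 0" if x: "x \<in> Iperp" and orth: "\<forall>y\<in>Iperp. B x y = 0" for x
  proof -
    have "B x z = 0" if "z \<in> A" for z
    proof -
      obtain i p where "i \<in> I" "p \<in> Iperp" "z = i + p" using \<open>z \<in> A\<close> span unfolding ssum_def by blast
      then show ?thesis
        using B_add_right[of i p x] I_subset_A Iperp_subset_A x orth B_Iperp_I by (auto simp: subsetD)
    qed
    then show ?thesis using nondeg x Iperp_subset_A unfolding nondeg_on_def by blast
  qed
  show int: "I \<inter> Iperp = {0}"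
  proof
    show "I \<inter> Iperp \<subseteq> {0}" using nd B_I_Iperp by blast
    show "{0} \<subseteq> I \<inter> Iperp"
      using V.subspace_0 graded_subspace graded_I graded_Iperp by blast
  qed
  show "nondeg_on B I"
    unfolding nondeg_on_def using int I_subset_A unfolding Iperp_def by blast
  show "nondeg_on B Iperp" unfolding nondeg_on_def using nd by blast
qed

text \<open>This is where irreducibility and maximality of \<open>I\<close> enter.\<close>

lemma Iperp_subset_I: "Iperp \<subseteq> I"
proof -
  define J where "J = ssum I Iperp"
  have J: "is_ideal sc V0 V1 n M J" unfolding J_def using is_ideal_ssum[OF I_ideal Iperp_ideal] .
  have 0: "0 \<in> I" "0 \<in> Iperp" using V.subspace_0 graded_subspace graded_I graded_Iperp by blast+
  have IJ: "I \<subseteq> J" "Iperp \<subseteq> J" unfolding J_def ssum_def using 0 by force+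
  show ?thesis
  proof (cases "J = A")
    case False
    then show ?thesis using I_maximal J IJ by blast
  next
    case True
    have "Iperp \<noteq> {0}"
    proof
      assume "Iperp = {0}"
      then have "J = I" unfolding J_def ssum_def by auto
      then show False using True I_ne_A by simp
    qed
    then show ?thesis
      using irreducible I_ideal Iperp_ideal I_ne_0 orth_split_if_I_plus_Iperp True
      unfolding irreducible_alg_def J_def by blast
  qed
qed

definition proj_along_I :: "'v \<Rightarrow> 'v" where
  "proj_along_I x = (THE h. h \<in> H \<and> x - h \<in> I)"

lemma proj_along_I_eq:
  assumes "h \<in> H" "x - h \<in> I"
  shows "proj_along_I x = h"
  unfolding proj_along_I_def
proof (rule the_equality)
  show "h \<in> H \<and> x - h \<in> I" using assms by blast
  fix h' assume h': "h' \<in> H \<and> x - h' \<in> I"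
  have "h' - h = (x - h) - (x - h')" by (simp add: algebra_simps)
  then have "h' - h \<in> I" using V.subspace_diff[OF graded_subspace[OF graded_I]] assms h' by metis
  moreover have "h' - h \<in> H" using V.subspace_diff[OF graded_subspace[OF graded_H]] assms h' by blast
  ultimately have "h' - h \<in> I \<inter> H" by blast
  then show "h' = h" using I_Int_H by simp
qed

lemma
  assumes "x \<in> A"
  shows proj_along_I_in_H: "proj_along_I x \<in> H" and proj_along_I_diff_in_I: "x - proj_along_I x \<in> I"
proof -
  obtain i h where "i \<in> I" "h \<in> H" "x = i + h" using assms I_plus_H unfolding ssum_def by blast
  then have "proj_along_I x = h" by (intro proj_along_I_eq) simp_all
  then show "proj_along_I x \<in> H" "x - proj_along_I x \<in> I" using \<open>i \<in> I\<close> \<open>h \<in> H\<close> \<open>x = i + h\<close> by auto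
qed

lemma proj_along_I_linear:
  assumes "x \<in> A" "y \<in> A"
  shows "proj_along_I (x + y) = proj_along_I x + proj_along_I y" and "proj_along_I (sc c x) = sc c (proj_along_I x)"
proof -
  have sI: "V.subspace I" and sH: "V.subspace H" using graded_subspace graded_I graded_H by blast+
  show "proj_along_I (x + y) = proj_along_I x + proj_along_I y"
  proof (rule proj_along_I_eq)
    show "proj_along_I x + proj_along_I y \<in> H" using proj_along_I_in_H assms V.subspace_add[OF sH] by blast
    have "x + y - (proj_along_I x + proj_along_I y) = (x - proj_along_I x) + (y - proj_along_I y)" by (simp add: algebra_simps)
    then show "x + y - (proj_along_I x + proj_along_I y) \<in> I" using proj_along_I_diff_in_I assms V.subspace_add[OF sI] by metis
  qed
  show "proj_along_I (sc c x) = sc c (proj_along_I x)"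
  proof (rule proj_along_I_eq)
    show "sc c (proj_along_I x) \<in> H" using proj_along_I_in_H assms V.subspace_scale[OF sH] by blast
    have "sc c x - sc c (proj_along_I x) = sc c (x - proj_along_I x)" by (simp add: V.scale_right_diff_distrib)
    then show "sc c x - sc c (proj_along_I x) \<in> I" using proj_along_I_diff_in_I assms V.subspace_scale[OF sI] by metis
  qed
qed

lemma proj_along_I_I: "i \<in> I \<Longrightarrow> proj_along_I i = 0"
  using proj_along_I_eq[of 0 i] V.subspace_0[OF graded_subspace[OF graded_H]] by simp

lemma proj_along_I_H: "h \<in> H \<Longrightarrow> proj_along_I h = h"
  using proj_along_I_eq[of h h] V.subspace_0[OF graded_subspace[OF graded_I]] by simp

lemma Iperp_eq_0_if_orth_H:
  assumes p: "p \<in> Iperp" and orth: "\<forall>x\<in>H. B p x = 0"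
  shows "p = 0"
proof -
  have "B p z = 0" if "z \<in> A" for z
  proof -
    obtain i x where "i \<in> I" "x \<in> H" "z = i + x" using \<open>z \<in> A\<close> I_plus_H unfolding ssum_def by blast
    then show ?thesis
      using B_add_right[of i x p] I_subset_A H_subset_A Iperp_subset_A p orth B_Iperp_I by (auto simp: subsetD)
  qed
  then show ?thesis using nondeg p Iperp_subset_A unfolding nondeg_on_def by blast
qed

text \<open>\<open>Iperp\<close> is identified with the dual of \<open>H\<close> through the form.\<close>

lemma hdual_represented:
  assumes \<alpha>: "\<alpha> \<in> hdual sc H"
  shows "\<exists>p\<in>Iperp. \<forall>x\<in>H. B p x = \<alpha> x"
proof -
  obtain S where S: "finite S" "S \<subseteq> A" "A \<subseteq> V.span S" using finite_spanning by blast
  have "\<forall>x\<in>A. \<forall>y\<in>A. \<forall>c. \<alpha> (proj_along_I (x + y)) = \<alpha> (proj_along_I x) + \<alpha> (proj_along_I y) \<and>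
      \<alpha> (proj_along_I (sc c x)) = c * \<alpha> (proj_along_I x)"
    using proj_along_I_linear proj_along_I_in_H hdual_add[OF \<alpha>] hdual_scale[OF \<alpha>] by simp
  from nondeg_form_represents_functional[OF V.vector_space_axioms subspace_A S(1,3) bilinear nondeg this]
  obtain w where w: "w \<in> A" "\<forall>x\<in>A. B w x = \<alpha> (proj_along_I x)" by blast
  have "\<alpha> 0 = 0" using hdual_scale[OF \<alpha>, of 0 0] V.subspace_0[OF graded_subspace[OF graded_H]] by simp
  then have "w \<in> Iperp" unfolding Iperp_def using w proj_along_I_I I_subset_A by auto
  moreover have "\<forall>x\<in>H. B w x = \<alpha> x" using w proj_along_I_H H_subset_A by auto
  ultimately show ?thesis by blast
qed

lemma hdual_par_represented:
  assumes \<alpha>: "\<alpha> \<in> hdual_par sc V0 V1 H q"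
  shows "\<exists>p\<in>Iperp \<inter> par_part V0 V1 q. \<forall>x\<in>H. B p x = \<alpha> x"
proof -
  have \<alpha>H: "\<alpha> \<in> hdual sc H" and other: "\<forall>x\<in>H \<inter> par_part V0 V1 (\<not> q). \<alpha> x = 0"
    using \<alpha> unfolding hdual_par_def by auto
  obtain w where w: "w \<in> Iperp" "\<forall>x\<in>H. B w x = \<alpha> x" using hdual_represented[OF \<alpha>H] by blast
  have wA: "w \<in> A" using w Iperp_subset_A by blast
  have "B (par_proj q w) x = \<alpha> x" if x: "x \<in> H" for x
  proof -
    have xA: "x \<in> A" using x H_subset_A by blast
    have parts: "par_proj q x \<in> H" "par_proj (\<not> q) x \<in> H \<inter> par_part V0 V1 (\<not> q)"
      using graded_par_proj[OF graded_H x] par_proj_in_par_part[OF xA] by blast+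
    have "B (par_proj q w) x = \<alpha> (par_proj q x)" using B_par_proj[OF wA xA] w parts by simp
    also have "\<dots> = \<alpha> x"
      using hdual_add[OF \<alpha>H parts(1), of "par_proj (\<not> q) x"] parts(2) other
        par_proj_sum[OF xA, of q, symmetric] by simp
    finally show ?thesis .
  qed
  moreover have "par_proj q w \<in> Iperp \<inter> par_part V0 V1 q"
    using graded_par_proj[OF graded_Iperp w(1)] par_proj_in_par_part[OF wA] by blast
  ultimately show ?thesis by blast
qed

definition dual_of :: "'v \<Rightarrow> 'v \<Rightarrow> 'k" where
  "dual_of p = (\<lambda>y. if y \<in> H then B p y else 0)"

lemma dual_of_hdual: "p \<in> A \<Longrightarrow> dual_of p \<in> hdual sc H"
  unfolding hdual_def dual_of_def
  using B_add_right B_scale_right H_subset_A V.subspace_add[OF graded_subspace[OF graded_H]]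
    V.subspace_scale[OF graded_subspace[OF graded_H]]
  by (auto simp: subsetD)

lemma dual_of_eq: "\<alpha> \<in> hdual sc H \<Longrightarrow> \<forall>x\<in>H. B p x = \<alpha> x \<Longrightarrow> dual_of p = \<alpha>"
  unfolding dual_of_def using hdual_outside by (intro ext) auto

lemma decomposition_exists:
  assumes x: "x \<in> A"
  shows "\<exists>g h p. g \<in> G \<and> h \<in> H \<and> p \<in> Iperp \<and> x = g + h + p"
proof -
  define h where "h = proj_along_I x"
  define i where "i = x - h"
  have h: "h \<in> H" and i: "i \<in> I" using proj_along_I_in_H[OF x] proj_along_I_diff_in_I[OF x]
    unfolding h_def i_def by auto
  obtain p where p: "p \<in> Iperp" "\<forall>y\<in>H. B p y = dual_of i y"
    using hdual_represented[OF dual_of_hdual] i I_subset_A by blast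
  have "i - p \<in> I" using V.subspace_diff[OF graded_subspace[OF graded_I] i] p(1) Iperp_subset_I by blast
  moreover have "B (i - p) y = 0" if "y \<in> H" for y
    using that p i B_diff_left I_subset_A Iperp_subset_A H_subset_A unfolding dual_of_def
    by (auto simp: subsetD)
  ultimately have "i - p \<in> G" unfolding G_def by blast
  moreover have "x = (i - p) + h + p" unfolding i_def by simp
  ultimately show ?thesis using h p(1) by blast
qed

lemma decomposition_unique:
  assumes "g \<in> G" "h \<in> H" "p \<in> Iperp" "g' \<in> G" "h' \<in> H" "p' \<in> Iperp"
    and eq: "g + h + p = g' + h' + p'"
  shows "g = g' \<and> h = h' \<and> p = p'"
proof -
  have sI: "V.subspace I" using graded_subspace[OF graded_I] .
  have I: "g \<in> I" "g' \<in> I" "p \<in> I" "p' \<in> I" using assms G_subset_I Iperp_subset_I by auto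
  have "h - h' = (g' - g) + (p' - p)" using eq by (simp add: algebra_simps)
  then have "h - h' \<in> I" using I V.subspace_diff[OF sI] V.subspace_add[OF sI] by metis
  moreover have "h - h' \<in> H" using V.subspace_diff[OF graded_subspace[OF graded_H]] assms by blast
  ultimately have "h - h' \<in> I \<inter> H" by blast
  then have hh: "h = h'" using I_Int_H by simp
  have pp: "p - p' = g' - g" using eq hh by (simp add: algebra_simps)
  have "p - p' \<in> Iperp" using V.subspace_diff[OF graded_subspace[OF graded_Iperp]] assms by blast
  moreover have "B (p - p') y = 0" if y: "y \<in> H" for y
    using pp B_diff_left[of g' g y] assms G_subset_A H_subset_A y B_G_H by (simp add: subsetD)
  ultimately have "p - p' = 0" using Iperp_eq_0_if_orth_H by blast
  then show ?thesis using hh pp by simp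
qed

definition decomp :: "'v \<Rightarrow> 'v \<times> 'v \<times> 'v" where
  "decomp x = (THE (g, h, p). g \<in> G \<and> h \<in> H \<and> p \<in> Iperp \<and> x = g + h + p)"

definition compG :: "'v \<Rightarrow> 'v" where "compG x = fst (decomp x)"
definition compH :: "'v \<Rightarrow> 'v" where "compH x = fst (snd (decomp x))"
definition compP :: "'v \<Rightarrow> 'v" where "compP x = snd (snd (decomp x))"

lemma comp_eq:
  assumes "g \<in> G" "h \<in> H" "p \<in> Iperp"
  shows "compG (g + h + p) = g" "compH (g + h + p) = h" "compP (g + h + p) = p"
proof -
  have "decomp (g + h + p) = (g, h, p)"
    unfolding decomp_def
  proof (rule the_equality)
    show "case (g, h, p) of (g', h', p') \<Rightarrow> g' \<in> G \<and> h' \<in> H \<and> p' \<in> Iperp \<and> g + h + p = g' + h' + p'"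
      using assms by simp
    fix t assume "case t of (g', h', p') \<Rightarrow> g' \<in> G \<and> h' \<in> H \<and> p' \<in> Iperp \<and> g + h + p = g' + h' + p'"
    then show "t = (g, h, p)" using decomposition_unique[OF assms] by (cases t) fastforce
  qed
  then show "compG (g + h + p) = g" "compH (g + h + p) = h" "compP (g + h + p) = p"
    unfolding compG_def compH_def compP_def by simp_all
qed

lemma
  assumes "x \<in> A"
  shows compG_in: "compG x \<in> G" and compH_in: "compH x \<in> H" and compP_in: "compP x \<in> Iperp"
    and comp_sum: "x = compG x + compH x + compP x"
proof -
  obtain g h p where "g \<in> G" "h \<in> H" "p \<in> Iperp" "x = g + h + p"
    using decomposition_exists[OF assms] by blast
  then show "compG x \<in> G" "compH x \<in> H" "compP x \<in> Iperp" "x = compG x + compH x + compP x"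
    using comp_eq by auto
qed

lemma comp_in_A: "x \<in> A \<Longrightarrow> compG x \<in> A \<and> compH x \<in> A \<and> compP x \<in> A"
  using compG_in compH_in compP_in G_subset_A H_subset_A Iperp_subset_A by blast

lemma comp_G: "g \<in> G \<Longrightarrow> compG g = g \<and> compH g = 0 \<and> compP g = 0"
  and comp_H: "h \<in> H \<Longrightarrow> compG h = 0 \<and> compH h = h \<and> compP h = 0"
  and comp_P: "p \<in> Iperp \<Longrightarrow> compG p = 0 \<and> compH p = 0 \<and> compP p = p"
  using comp_eq[of g 0 0] comp_eq[of 0 h 0] comp_eq[of 0 0 p]
    V.subspace_0[OF graded_subspace[OF graded_G]] V.subspace_0[OF graded_subspace[OF graded_H]]
    V.subspace_0[OF graded_subspace[OF graded_Iperp]]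
  by simp_all

lemma comp_add:
  assumes "x \<in> A" "y \<in> A"
  shows "compG (x + y) = compG x + compG y \<and> compH (x + y) = compH x + compH y \<and>
    compP (x + y) = compP x + compP y"
proof -
  have "x + y = (compG x + compH x + compP x) + (compG y + compH y + compP y)"
    by (rule arg_cong2[where f = "(+)", OF comp_sum[OF assms(1)] comp_sum[OF assms(2)]])
  also have "\<dots> = (compG x + compG y) + (compH x + compH y) + (compP x + compP y)"
    by (simp add: algebra_simps)
  finally have e: "x + y = (compG x + compG y) + (compH x + compH y) + (compP x + compP y)" .
  have "compG x + compG y \<in> G" "compH x + compH y \<in> H" "compP x + compP y \<in> Iperp"
    using V.subspace_add[OF subspace_G compG_in[OF assms(1)] compG_in[OF assms(2)]]
      V.subspace_add[OF subspace_H compH_in[OF assms(1)] compH_in[OF assms(2)]]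
      V.subspace_add[OF subspace_Iperp compP_in[OF assms(1)] compP_in[OF assms(2)]] .
  then show ?thesis unfolding e using comp_eq by simp
qed

lemma comp_scale:
  assumes "x \<in> A"
  shows "compG (sc c x) = sc c (compG x) \<and> compH (sc c x) = sc c (compH x) \<and>
    compP (sc c x) = sc c (compP x)"
proof -
  have "sc c x = sc c (compG x + compH x + compP x)" using comp_sum[OF assms] by (rule arg_cong)
  then have e: "sc c x = sc c (compG x) + sc c (compH x) + sc c (compP x)"
    by (simp add: V.scale_right_distrib)
  have "sc c (compG x) \<in> G" "sc c (compH x) \<in> H" "sc c (compP x) \<in> Iperp"
    using V.subspace_scale[OF subspace_G compG_in[OF assms]] V.subspace_scale[OF subspace_H compH_in[OF assms]]
      V.subspace_scale[OF subspace_Iperp compP_in[OF assms]] .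
  then show ?thesis unfolding e using comp_eq by simp
qed

lemma comp_par_part:
  assumes x: "x \<in> par_part V0 V1 q"
  shows "compG x \<in> par_part V0 V1 q" "compH x \<in> par_part V0 V1 q" "compP x \<in> par_part V0 V1 q"
proof -
  have xA: "x \<in> A" using x par_part_subset_A by blast
  note c = comp_in_A[OF xA]
  have "x = par_proj q (compG x) + par_proj q (compH x) + par_proj q (compP x)"
    using par_proj_par_part[OF x] comp_sum[OF xA] par_proj_add c A_add by metis
  moreover have "par_proj q (compG x) \<in> G" "par_proj q (compH x) \<in> H" "par_proj q (compP x) \<in> Iperp"
    using graded_par_proj graded_G graded_H graded_Iperp compG_in compH_in compP_in xA by blast+
  ultimately have "compG x = par_proj q (compG x)" "compH x = par_proj q (compH x)"
    "compP x = par_proj q (compP x)"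
    using comp_eq by metis+
  then show "compG x \<in> par_part V0 V1 q" "compH x \<in> par_part V0 V1 q" "compP x \<in> par_part V0 V1 q"
    using par_proj_in_par_part c by metis+
qed

lemma B_compG:
  assumes g: "g \<in> G" and z: "z \<in> A"
  shows "B g (compG z) = B g z"
proof -
  note c = comp_in_A[OF z]
  have "B g z = B g (compG z) + B g (compH z) + B g (compP z)"
    using comp_sum[OF z] B_add_right c A_add g G_subset_A by (metis subsetD)
  moreover have "B g (compH z) = 0" using B_G_H g compH_in[OF z] by blast
  moreover have "B g (compP z) = 0" using B_I_Iperp compP_in[OF z] G_subset_I g by blast
  ultimately show ?thesis by simp
qed


definition span_list :: "'v list" where
  "span_list = (SOME l. set l \<subseteq> A \<and> A \<subseteq> V.span (set l))"

lemma span_list: "set span_list \<subseteq> A" "A \<subseteq> V.span (set span_list)"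
proof -
  obtain S where "finite S" "S \<subseteq> A" "A \<subseteq> V.span S" using finite_spanning by blast
  then have "\<exists>l. set l \<subseteq> A \<and> A \<subseteq> V.span (set l)" using finite_list by metis
  then show "set span_list \<subseteq> A" "A \<subseteq> V.span (set span_list)"
    unfolding span_list_def using someI_ex by (metis (mono_tags, lifting))+
qed

text \<open>\<open>G\<close> is realised in \<open>nat \<Rightarrow> 'k\<close> by the coordinates of the functional \<open>B g\<close> against
  a spanning list of \<open>A\<close>; non-degeneracy makes this injective.\<close>

definition coords :: "'v \<Rightarrow> nat \<Rightarrow> 'k" where
  "coords g = (\<lambda>i. if i < length span_list then B g (span_list ! i) else 0)"

lemma span_list_nth: "i < length span_list \<Longrightarrow> span_list ! i \<in> A"
  using span_list(1) nth_mem by blast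

lemma coords_add: "x \<in> A \<Longrightarrow> y \<in> A \<Longrightarrow> coords (x + y) = coords x + coords y"
  unfolding coords_def by (rule ext) (simp add: B_add_left span_list_nth)

lemma coords_scale: "x \<in> A \<Longrightarrow> coords (sc c x) = scG c (coords x)"
  unfolding coords_def scG_def by (rule ext) (simp add: B_scale_left span_list_nth)

lemma coords_0: "coords 0 = 0"
  unfolding coords_def by (rule ext) (simp add: B_0_left span_list_nth)

lemma coords_inj: "inj_on coords A"
proof (rule inj_onI)
  fix x y assume xy: "x \<in> A" "y \<in> A" "coords x = coords y"
  have "B (x - y) b = 0" if b: "b \<in> set span_list" for b
  proof -
    obtain i where i: "i < length span_list" "span_list ! i = b" using b by (auto simp: in_set_conv_nth)
    have "coords x i = coords y i" using xy(3) by simp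
    then have "B x b = B y b" using i unfolding coords_def by simp
    then show ?thesis using B_diff_left[OF xy(1,2) span_list_nth[OF i(1)]] i(2) by simp
  qed
  then have "x - y = 0" using orth_spanning_zero[OF A_diff[OF xy(1,2)] span_list] by blast
  then show "x = y" by simp
qed

lemma dual_of_add: "p \<in> A \<Longrightarrow> q \<in> A \<Longrightarrow> dual_of (p + q) = dual_of p + dual_of q"
  unfolding dual_of_def using B_add_left H_subset_A by (intro ext) (auto simp: subsetD)

lemma dual_of_scale: "p \<in> A \<Longrightarrow> dual_of (sc c p) = (\<lambda>v. c * dual_of p v)"
  unfolding dual_of_def using B_scale_left H_subset_A by (intro ext) (auto simp: subsetD)

lemma dual_of_0: "dual_of 0 = 0"
  unfolding dual_of_def using B_0_left H_subset_A by (intro ext) (auto simp: subsetD)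

lemma dual_of_inj: "inj_on dual_of Iperp"
proof (rule inj_onI)
  fix p q assume pq: "p \<in> Iperp" "q \<in> Iperp" "dual_of p = dual_of q"
  have "B (p - q) x = 0" if x: "x \<in> H" for x
    using fun_cong[OF pq(3), of x] x pq(1,2) B_diff_left Iperp_subset_A H_subset_A
    unfolding dual_of_def by (simp add: subsetD)
  moreover have "p - q \<in> Iperp" using V.subspace_diff[OF subspace_Iperp pq(1,2)] .
  ultimately show "p = q" using Iperp_eq_0_if_orth_H by fastforce
qed

lemma dual_of_hdual_par: "p \<in> Iperp \<Longrightarrow> p \<in> par_part V0 V1 q \<Longrightarrow> dual_of p \<in> hdual_par sc V0 V1 H q"
  unfolding hdual_par_def using dual_of_hdual Iperp_subset_A B_even_odd
  by (cases q) (auto simp: dual_of_def par_part_def subsetD)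

definition phi :: "'v \<Rightarrow> (nat \<Rightarrow> 'k) \<times> 'v \<times> ('v \<Rightarrow> 'k)" where
  "phi x = (coords (compG x), compH x, dual_of (compP x))"

lemma phi_add: "x \<in> A \<Longrightarrow> y \<in> A \<Longrightarrow> phi (x + y) = phi x + phi y"
  unfolding phi_def using comp_add comp_in_A coords_add dual_of_add by simp

lemma phi_scale: "x \<in> A \<Longrightarrow> phi (sc c x) = scD sc c (phi x)"
  unfolding phi_def scD_def using comp_scale comp_in_A coords_scale dual_of_scale by simp

lemma phi_inj: "inj_on phi A"
proof (rule inj_onI)
  fix x y assume xy: "x \<in> A" "y \<in> A" "phi x = phi y"
  have "compG x = compG y" using xy(3) inj_onD[OF coords_inj] comp_in_A xy(1,2)
    unfolding phi_def by simp
  moreover have "compP x = compP y" using xy(3) inj_onD[OF dual_of_inj] compP_in xy(1,2)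
    unfolding phi_def by simp
  moreover have "compH x = compH y" using xy(3) unfolding phi_def by simp
  ultimately show "x = y" using comp_sum xy(1,2) by metis
qed

lemma phi_G: "g \<in> G \<Longrightarrow> phi g = (coords g, 0, 0)"
  unfolding phi_def using comp_G dual_of_0 by simp
lemma phi_H: "h \<in> H \<Longrightarrow> phi h = (0, h, 0)"
  unfolding phi_def using comp_H dual_of_0 coords_0 by simp
lemma phi_P: "p \<in> Iperp \<Longrightarrow> phi p = (0, 0, dual_of p)"
  unfolding phi_def using comp_P coords_0 by simp

sublocale phi: graded_linear_embedding sc V0 V1 "scD sc" phi
  by unfold_locales (use vector_space_scD[OF V.vector_space_axioms] phi_add phi_scale phi_inj in
      \<open>auto simp: vector_space_def\<close>)

definition G0 :: "(nat \<Rightarrow> 'k) set" where "G0 = coords ` (G \<inter> V0)"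
definition G1 :: "(nat \<Rightarrow> 'k) set" where "G1 = coords ` (G \<inter> V1)"

definition Bg :: "(nat \<Rightarrow> 'k) \<Rightarrow> (nat \<Rightarrow> 'k) \<Rightarrow> 'k" where
  "Bg u v = B (inv_into G coords u) (inv_into G coords v)"

definition Mg :: "(nat \<Rightarrow> 'k) list \<Rightarrow> nat \<Rightarrow> 'k" where
  "Mg us = coords (compG (M (map (inv_into G coords) us)))"

definition Md :: "((nat \<Rightarrow> 'k) \<times> 'v \<times> ('v \<Rightarrow> 'k)) list \<Rightarrow> (nat \<Rightarrow> 'k) \<times> 'v \<times> ('v \<Rightarrow> 'k)" where
  "Md ds = phi (M (map (inv_into A phi) ds))"

lemma coords_inj_G: "inj_on coords G" using inj_on_subset[OF coords_inj G_subset_A] .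

lemma Bg_coords: "x \<in> G \<Longrightarrow> y \<in> G \<Longrightarrow> Bg (coords x) (coords y) = B x y"
  unfolding Bg_def using inv_into_f_f[OF coords_inj_G] by simp

lemma Mg_coords: "set as \<subseteq> G \<Longrightarrow> Mg (map coords as) = coords (compG (M as))"
  unfolding Mg_def using inv_into_f_f[OF coords_inj_G] by (simp add: map_idI subsetD)

lemma Md_phi: "set as \<subseteq> A \<Longrightarrow> Md (map phi as) = phi (M as)"
  unfolding Md_def using inv_into_f_f[OF phi_inj] by (simp add: map_idI subsetD)

lemma nondeg_G: "nondeg_on B G"
  unfolding nondeg_on_def
proof (intro ballI impI)
  fix x assume x: "x \<in> G" and orth: "\<forall>y\<in>G. B x y = 0"
  have "\<forall>z\<in>A. B x z = 0" using B_compG[OF x] orth compG_in by metis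
  then show "x = 0" using nondeg x G_subset_A unfolding nondeg_on_def by blast
qed

lemma G_algebra: "comm_inv_superalg sc (G \<inter> V0) (G \<inter> V1) n B (\<lambda>as. compG (M as))"
  by (rule comm_inv_superalg_compression[OF graded_G nondeg_G compG_in])
    (use comp_add comp_scale B_compG in simp_all)

lemma ssum_G: "ssum (G \<inter> V0) (G \<inter> V1) = G"
  using graded_G unfolding graded_subspace_def by blast

sublocale coords: graded_linear_embedding sc "G \<inter> V0" "G \<inter> V1" scG coords
proof unfold_locales
  show "superspace sc (G \<inter> V0) (G \<inter> V1)" using G_algebra unfolding comm_inv_superalg_def by blast
qed (use coords_add coords_scale coords_inj_G G_subset_A in
    \<open>auto simp: ssum_G subsetD scG_def algebra_simps\<close>)

lemma g_algebra: "comm_inv_superalg scG G0 G1 n Bg Mg"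
  unfolding G0_def G1_def
  by (rule coords.comm_inv_superalg_image[OF _ G_algebra arity_pos])
    (simp_all add: ssum_G Mg_coords Bg_coords)

lemma phi_par_part: "phi ` par_part V0 V1 q = dpart sc V0 V1 H G0 G1 q"
proof
  show "phi ` par_part V0 V1 q \<subseteq> dpart sc V0 V1 H G0 G1 q"
  proof
    fix d assume "d \<in> phi ` par_part V0 V1 q"
    then obtain x where x: "x \<in> par_part V0 V1 q" "d = phi x" by auto
    have xA: "x \<in> A" using x par_part_subset_A by blast
    note par = comp_par_part[OF x(1)]
    have "coords (compG x) \<in> par_part G0 G1 q"
      using par(1) compG_in[OF xA] unfolding G0_def G1_def par_part_def by (cases q) auto
    moreover have "compH x \<in> H \<inter> par_part V0 V1 q" using par(2) compH_in[OF xA] by blast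
    moreover have "dual_of (compP x) \<in> hdual_par sc V0 V1 H q"
      using dual_of_hdual_par par(3) compP_in[OF xA] by blast
    ultimately show "d \<in> dpart sc V0 V1 H G0 G1 q" unfolding dpart_def x(2) phi_def by simp
  qed
  show "dpart sc V0 V1 H G0 G1 q \<subseteq> phi ` par_part V0 V1 q"
  proof
    fix d assume "d \<in> dpart sc V0 V1 H G0 G1 q"
    then obtain u h \<alpha> where d: "d = (u, h, \<alpha>)" "u \<in> par_part G0 G1 q" "h \<in> H \<inter> par_part V0 V1 q"
      "\<alpha> \<in> hdual_par sc V0 V1 H q"
      unfolding dpart_def by auto
    obtain g where g: "g \<in> G" "g \<in> par_part V0 V1 q" "u = coords g"
      using d(2) unfolding G0_def G1_def par_part_def by (cases q) auto
    obtain p where p: "p \<in> Iperp" "p \<in> par_part V0 V1 q" "\<forall>y\<in>H. B p y = \<alpha> y"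
      using hdual_par_represented[OF d(4)] by blast
    have "\<alpha> \<in> hdual sc H" using d(4) unfolding hdual_par_def by blast
    then have "phi (g + h + p) = d"
      using comp_eq[OF g(1) _ p(1), of h] d(1,3) g(3) dual_of_eq p(3) unfolding phi_def by simp
    moreover have "g + h + p \<in> par_part V0 V1 q"
      using V.subspace_add[OF subspace_par_part] g(2) d(3) p(2) by blast
    ultimately show "d \<in> phi ` par_part V0 V1 q" by blast
  qed
qed

lemma phi_isometry:
  assumes x: "x \<in> A" and y: "y \<in> A"
  shows "formD V0 V1 Bg (phi x) (phi y) = B x y"
proof -
  define g1 h1 p1 g2 h2 p2 where "g1 = compG x" "h1 = compH x" "p1 = compP x"
    "g2 = compG y" "h2 = compH y" "p2 = compP y"
  note defs = g1_h1_p1_g2_h2_p2_def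
  have m: "g1 \<in> G" "h1 \<in> H" "p1 \<in> Iperp" "g2 \<in> G" "h2 \<in> H" "p2 \<in> Iperp"
    using compG_in compH_in compP_in x y unfolding defs by auto
  have mA: "g1 \<in> A" "h1 \<in> A" "p1 \<in> A" "g2 \<in> A" "h2 \<in> A" "p2 \<in> A"
    using m G_subset_A H_subset_A Iperp_subset_A by auto
  have mI: "g1 \<in> I" "g2 \<in> I" "p1 \<in> I" "p2 \<in> I" using m G_subset_I Iperp_subset_I by auto
  have eh: "ev h1 \<in> H" "ev h1 \<in> par_part V0 V1 False" "h1 - ev h1 \<in> H"
    "h1 - ev h1 \<in> par_part V0 V1 True"
    using graded_even[OF graded_H m(2)] graded_odd[OF graded_H m(2)] unfolding par_part_def by auto
  have "formD V0 V1 Bg (phi x) (phi y) = B g1 g2 + B p1 h2 - B p2 (ev h1) + B p2 (h1 - ev h1)"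
    unfolding phi_def formD_def defs[symmetric] using Bg_coords m eh unfolding dual_of_def
    by (simp add: Let_def)
  moreover have "B x y = B g1 y + B h1 y + B p1 y"
    unfolding defs using comp_sum[OF x] B_add_left comp_in_A[OF x] y A_add by metis
  moreover have "B g1 y = B g1 g2"
  proof -
    have "B g1 y = B g1 g2 + B g1 h2 + B g1 p2"
      unfolding defs using comp_sum[OF y] B_add_right comp_in_A[OF y] mA(1) A_add defs by metis
    then show ?thesis using B_G_H B_I_Iperp m mI by simp
  qed
  moreover have "B h1 y = - B p2 (ev h1) + B p2 (h1 - ev h1)"
  proof -
    have "B h1 y = B h1 g2 + B h1 h2 + B h1 p2"
      unfolding defs using comp_sum[OF y] B_add_right comp_in_A[OF y] mA(2) A_add defs by metis
    moreover have "B h1 g2 = 0" "B h1 h2 = 0" using B_H_G B_H_H m by auto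
    moreover have "B h1 p2 = B (ev h1) p2 + B (h1 - ev h1) p2"
      using B_add_left[OF even_part_in_A[OF mA(2)] odd_part_in_A[OF mA(2)] mA(6)] by simp
    moreover have "B (ev h1) p2 = - B p2 (ev h1)"
      using B_skew_homogeneous'[OF mA(6) eh(2)] unfolding psign_def by simp
    moreover have "B (h1 - ev h1) p2 = B p2 (h1 - ev h1)"
      using B_skew_homogeneous'[OF mA(6) eh(4)] unfolding psign_def by simp
    ultimately show ?thesis by simp
  qed
  moreover have "B p1 y = B p1 h2"
  proof -
    have "B p1 y = B p1 g2 + B p1 h2 + B p1 p2"
      unfolding defs using comp_sum[OF y] B_add_right comp_in_A[OF y] mA(3) A_add defs by metis
    then show ?thesis using B_Iperp_I m mI by simp
  qed
  ultimately show ?thesis by simp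
qed

lemma d_algebra:
  "comm_inv_superalg (scD sc) (dpart sc V0 V1 H G0 G1 False) (dpart sc V0 V1 H G0 G1 True) n
     (formD V0 V1 Bg) Md"
  using phi.comm_inv_superalg_image[OF Md_phi comm_inv arity_pos phi_isometry]
    phi_par_part[of False] phi_par_part[of True]
  unfolding par_part_def by simp


definition block :: "nat \<Rightarrow> 'v set" where
  "block l = (if l = 0 then G else if l = 1 then H else Iperp)"

lemma graded_block: "graded (block l)"
  unfolding block_def using graded_G graded_H graded_Iperp by simp

lemma block_subset_A: "block l \<subseteq> A"
  using graded_subset_A[OF graded_block] .

lemma block_subset_I: "l \<noteq> 1 \<Longrightarrow> block l \<subseteq> I"
  unfolding block_def using G_subset_I Iperp_subset_I by auto

lemma dblock_preimage:
  assumes "l < 3" "d \<in> dblock sc H (ssum G0 G1) l"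
  shows "\<exists>b\<in>block l. d = phi b"
proof -
  have G01: "ssum G0 G1 = coords ` G" using coords.ssum_image_eq unfolding G0_def G1_def ssum_G .
  consider "l = 0" | "l = 1" | "l = 2" using assms(1) by linarith
  then show ?thesis
  proof cases
    case 3
    then obtain \<alpha> where \<alpha>: "\<alpha> \<in> hdual sc H" "d = (0, 0, \<alpha>)" using assms(2) unfolding dblock_def by auto
    obtain p where "p \<in> Iperp" "\<forall>x\<in>H. B p x = \<alpha> x" using hdual_represented[OF \<alpha>(1)] by blast
    then show ?thesis using phi_P dual_of_eq[OF \<alpha>(1)] \<alpha> 3 unfolding block_def by auto
  qed (use assms(2) phi_G phi_H in \<open>auto simp: dblock_def block_def G01\<close>)
qed

definition labelled :: "nat list \<Rightarrow> 'v list \<Rightarrow> bool" where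
  "labelled ls bs \<longleftrightarrow> length ls = Suc n \<and> length bs = Suc n \<and>
     (\<forall>j<Suc n. ls ! j < 3 \<and> bs ! j \<in> block (ls ! j))"

lemma labelled_in_A:
  assumes "labelled ls bs"
  shows "set bs \<subseteq> A"
proof
  fix x assume "x \<in> set bs"
  then obtain j where j: "j < Suc n" "bs ! j = x"
    using assms unfolding labelled_def by (auto simp: in_set_conv_nth)
  then have "bs ! j \<in> block (ls ! j)" using assms unfolding labelled_def by blast
  then show "x \<in> A" using block_subset_A j(2) by blast
qed

lemma labelled_labels: "labelled ls bs \<Longrightarrow> \<forall>l\<in>set ls. l < 3"
  unfolding labelled_def by (auto simp: in_set_conv_nth)

lemma labelled_block:
  "labelled ls bs \<Longrightarrow> j < Suc n \<Longrightarrow> ls ! j = l \<Longrightarrow> bs ! j \<in> block l"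
  unfolding labelled_def by blast

lemma T_G:
  assumes "length bs = Suc n" "set bs \<subseteq> G"
  shows "T bs = Bg (coords (hd bs)) (Mg (map coords (tl bs)))"
proof -
  have hd: "hd bs \<in> G" and tl: "set (tl bs) \<subseteq> G" using assms by (cases bs; auto)+
  have MA: "M (tl bs) \<in> A" using M_closed assms tl G_subset_A by auto
  show ?thesis
    using Mg_coords[OF tl] Bg_coords[OF hd compG_in[OF MA]] B_compG[OF hd MA] unfolding T_def by simp
qed

lemma T_H:
  assumes "length bs = Suc n" "set bs \<subseteq> H"
  shows "T bs = 0"
proof -
  have "hd bs \<in> H" "set (tl bs) \<subseteq> H" using assms by (cases bs; auto)+
  then show ?thesis using H_closed B_H_H assms unfolding T_def by simp
qed

lemma T_G_slot_H_rest:
  assumes bs: "length bs = Suc n" and j: "j < Suc n" "bs ! j \<in> G"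
    and rest: "\<And>k. k < Suc n \<Longrightarrow> k \<noteq> j \<Longrightarrow> bs ! k \<in> H"
  shows "T bs = 0"
proof (rule T_vanishes_on_graded_blocks[where S = "\<lambda>i. if i = j then G else H" and k = j])
  show "\<And>i. i \<le> n \<Longrightarrow> graded (if i = j then G else H)" using graded_G graded_H by simp
  show "j \<le> n" "length bs = Suc n" using j bs by simp_all
  show "\<forall>i\<le>n. bs ! i \<in> (if i = j then G else H)" using j rest by auto
next
  fix cs :: "'v list" assume cs: "length cs = Suc n" "\<forall>i\<le>n. cs ! i \<in> (if i = j then G else H) \<and> homogeneous (cs ! i)"
  have "set (remove_nth j cs) \<subseteq> H"
  proof
    fix x assume "x \<in> set (remove_nth j cs)"
    then obtain i where "i < length cs" "i \<noteq> j" "cs ! i = x" by (blast dest: in_set_remove_nthD)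
    moreover from this have "i \<le> n" using cs(1) by simp
    note cs(2)[rule_format, OF this]
    ultimately show "x \<in> H" by simp
  qed
  then have "M (remove_nth j cs) \<in> H" using H_closed cs j by simp
  moreover have "j \<le> n" using j by simp
  note cs(2)[rule_format, OF this]
  then have "cs ! j \<in> G" by simp
  ultimately show "T (cs ! j # remove_nth j cs) = 0" using B_G_H unfolding T_def by simp
qed

lemma T_Iperp_slot_I_slot:
  assumes bs: "length bs = Suc n" "set bs \<subseteq> A"
    and jk: "j < Suc n" "k < Suc n" "k \<noteq> j" "bs ! j \<in> Iperp" "bs ! k \<in> I"
  shows "T bs = 0"
proof -
  define S where "S i = (if i = j then Iperp else if i = k then I else A)" for i
  show ?thesis
  proof (rule T_vanishes_on_graded_blocks[where S = S and k = j])
    show "\<And>i. i \<le> n \<Longrightarrow> graded (S i)" unfolding S_def using graded_Iperp graded_I graded_A by simp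
    show "j \<le> n" "length bs = Suc n" using jk bs by simp_all
    show "\<forall>i\<le>n. bs ! i \<in> S i"
    proof (intro allI impI)
      fix i assume "i \<le> n"
      then have "bs ! i \<in> set bs" using bs(1) by simp
      then have "bs ! i \<in> A" using bs(2) by blast
      then show "bs ! i \<in> S i" using jk unfolding S_def by simp
    qed
  next
    fix cs :: "'v list" assume cs: "length cs = Suc n" "\<forall>i\<le>n. cs ! i \<in> S i \<and> homogeneous (cs ! i)"
    have slot: "cs ! i \<in> S i" if "i < Suc n" for i using cs(2)[rule_format, of i] that by simp
    have "S i \<subseteq> A" for i unfolding S_def using Iperp_subset_A I_subset_A by simp
    then have "cs ! i \<in> A" if "i < Suc n" for i using slot[OF that] by blast
    then have csA: "set cs \<subseteq> A" using cs(1) by (auto simp: in_set_conv_nth)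
    have "cs ! k \<in> set (remove_nth j cs)" using nth_in_set_remove_nth[of k cs j] jk cs(1) by simp
    then obtain k' where k': "k' < n" "remove_nth j cs ! k' = cs ! k"
      using cs(1) jk by (auto simp: in_set_conv_nth)
    have "M (remove_nth j cs) \<in> I"
    proof (rule ideal_absorbs_any_slot[OF I_ideal _ _ k'(1)])
      show "length (remove_nth j cs) = n" using cs(1) jk by simp
      show "set (remove_nth j cs) \<subseteq> A" using set_remove_nth_subset[of j cs] csA by (rule subset_trans)
      show "remove_nth j cs ! k' \<in> I" using k'(2) slot[OF jk(2)] jk(3) unfolding S_def by simp
    qed
    moreover have "cs ! j \<in> Iperp" using slot[OF jk(1)] unfolding S_def by simp
    ultimately show "T (cs ! j # remove_nth j cs) = 0" using B_Iperp_I unfolding T_def by simp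
  qed
qed


lemma labelled_all_G:
  assumes "labelled ls bs" "count_list ls 0 = Suc n"
  shows "set bs \<subseteq> G"
proof
  fix x assume "x \<in> set bs"
  then obtain j where j: "j < Suc n" "bs ! j = x"
    using assms(1) unfolding labelled_def by (auto simp: in_set_conv_nth)
  have "ls ! j = 0" using nth_eq_if_count_list_eq_length[of ls 0 j] assms j(1)
    unfolding labelled_def by simp
  then show "x \<in> G" using labelled_block[OF assms(1) j(1)] j(2) unfolding block_def by simp
qed

lemma labelled_nu:
  assumes bs: "labelled ls bs" and c: "count_list ls 1 = n" "count_list ls 2 = 1" "ls ! 0 = 2"
  shows "hd bs \<in> Iperp" "set (tl bs) \<subseteq> H"
proof -
  have l: "length ls = Suc n" "length bs = Suc n" using bs unfolding labelled_def by simp_all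
  show "hd bs \<in> Iperp"
    using labelled_block[OF bs _ c(3)] l(2) unfolding block_def by (cases bs) simp_all
  show "set (tl bs) \<subseteq> H"
  proof
    fix x assume "x \<in> set (tl bs)"
    then obtain j where j: "j < n" "bs ! Suc j = x" using l(2) by (cases bs) (auto simp: in_set_conv_nth)
    have lj: "ls ! Suc j = 1" using nth_eq_if_count_list_one_less[of ls 1 0 "Suc j"] l(1) c j(1) by simp
    then show "x \<in> H" using labelled_block[OF bs _ lj] j unfolding block_def by simp
  qed
qed

lemma T_top_components:
  assumes bs: "labelled ls bs" and c: "count_list ls 2 = 0" "n \<le> count_list ls 1"
  shows "T bs = 0"
proof -
  have l: "length ls = Suc n" "length bs = Suc n" using bs unfolding labelled_def by simp_all
  have labels: "\<forall>l\<in>set ls. l < 3" using labelled_labels[OF bs] .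
  have "count_list ls 1 \<le> Suc n" using count_le_length[of ls 1] l(1) by simp
  then consider "count_list ls 1 = Suc n" | "count_list ls 1 = n" using c(2) by linarith
  then show ?thesis
  proof cases
    case 1
    have "set bs \<subseteq> H"
    proof
      fix x assume "x \<in> set bs"
      then obtain j where j: "j < Suc n" "bs ! j = x" using l(2) by (auto simp: in_set_conv_nth)
      have "ls ! j = 1" using nth_eq_if_count_list_eq_length[of ls 1 j] 1 l(1) j(1) by simp
      then show "x \<in> H" using labelled_block[OF bs j(1)] j(2) unfolding block_def by simp
    qed
    then show ?thesis using T_H l(2) by blast
  next
    case 2
    obtain j where j: "j < Suc n" "ls ! j = 0" and others: "\<And>k. k < Suc n \<Longrightarrow> k \<noteq> j \<Longrightarrow> ls ! k = 1"
      using labels_single_zero[OF l(1) labels c(1) 2] by blast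
    show ?thesis
    proof (rule T_G_slot_H_rest[OF l(2) j(1)])
      show "bs ! j \<in> G" using labelled_block[OF bs j] unfolding block_def by simp
      show "bs ! k \<in> H" if "k < Suc n" "k \<noteq> j" for k
        using labelled_block[OF bs that(1) others[OF that]] unfolding block_def by simp
    qed
  qed
qed

lemma T_mixed_components:
  assumes bs: "labelled ls bs"
    and c: "\<not> (count_list ls 0 = Suc n \<or> count_list ls 1 = n \<and> count_list ls 2 = 1 \<or>
              count_list ls 2 = 0 \<and> 1 \<le> count_list ls 1)"
  shows "T bs = 0"
proof -
  have l: "length ls = Suc n" "length bs = Suc n" using bs unfolding labelled_def by simp_all
  obtain j k where jk: "j < Suc n" "k < Suc n" "k \<noteq> j" "ls ! j = 2" "ls ! k \<noteq> 1"
    using labels_two_and_other[OF l(1) labelled_labels[OF bs] c] by blast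
  show ?thesis
  proof (rule T_Iperp_slot_I_slot[OF l(2) labelled_in_A[OF bs] jk(1-3)])
    show "bs ! j \<in> Iperp" using labelled_block[OF bs jk(1,4)] unfolding block_def by simp
    show "bs ! k \<in> I" using labelled_block[OF bs jk(2) refl] block_subset_I[OF jk(5)] by blast
  qed
qed

lemma labelled_preimage:
  assumes ls: "length ls = Suc n" "length as = Suc n"
    and blocks: "\<forall>j<Suc n. ls ! j < 3 \<and> as ! j \<in> dblock sc H (ssum G0 G1) (ls ! j)"
  obtains bs where "labelled ls bs" "as = map phi bs"
proof
  define bs where "bs = map (inv_into A phi) as"
  have bs_nth: "bs ! j \<in> block (ls ! j) \<and> as ! j = phi (bs ! j)" if j: "j < Suc n" for j
  proof -
    obtain b where b: "b \<in> block (ls ! j)" "as ! j = phi b" using dblock_preimage blocks j by blast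
    then have "b \<in> A" using block_subset_A by blast
    then have "bs ! j = b" unfolding bs_def using j ls(2) b(2) inv_into_f_f[OF phi_inj] by simp
    then show ?thesis using b by simp
  qed
  have l: "length bs = Suc n" unfolding bs_def using ls(2) by simp
  show "labelled ls bs" unfolding labelled_def using ls(1) l blocks bs_nth by blast
  show "as = map phi bs"
  proof (rule nth_equalityI)
    show "length as = length (map phi bs)" using l ls(2) by simp
    fix j assume "j < length as"
    then show "as ! j = map phi bs ! j" using bs_nth l ls(2) by simp
  qed
qed

lemma formD_phi_T:
  assumes "length bs = Suc n" "set bs \<subseteq> A"
  shows "formD V0 V1 Bg (hd (map phi bs)) (Md (tl (map phi bs))) = T bs"
proof -
  obtain b0 rest where bs: "bs = b0 # rest" using assms(1) by (cases bs) auto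
  have r: "length rest = n" "set rest \<subseteq> A" "b0 \<in> A" using assms bs by auto
  show ?thesis
    using Md_phi[OF r(2)] phi_isometry[OF r(3) M_closed[OF r(1,2)]] bs unfolding T_def by simp
qed

text \<open>For \<open>i < n\<close> the component \<open>\<psi>\<^sub>i\<close> is simply read off the potential; the content of
  the theorem is that the components \<open>\<psi>\<^sub>n\<close> and \<open>\<psi>\<^sub>n\<^sub>+\<^sub>1\<close> vanish.\<close>

definition psi :: "nat \<Rightarrow> ((nat \<Rightarrow> 'k) \<times> 'v \<times> ('v \<Rightarrow> 'k)) list \<Rightarrow> 'k" where
  "psi i ds = (if i < n then formD V0 V1 Bg (hd ds) (Md (tl ds)) else 0)"

lemma gen_double_ext_phi: "gen_double_ext sc V0 V1 n M H G0 G1 Bg Mg Md psi"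
  unfolding gen_double_ext_def
proof (intro conjI allI impI)
  show "comm_inv_superalg scG G0 G1 n Bg Mg" by (rule g_algebra)
  show "comm_inv_superalg (scD sc) (dpart sc V0 V1 H G0 G1 False) (dpart sc V0 V1 H G0 G1 True) n
      (formD V0 V1 Bg) Md" by (rule d_algebra)
  fix ls :: "nat list" and as
  assume "length ls = Suc n \<and> length as = Suc n \<and>
    (\<forall>j<Suc n. ls ! j < 3 \<and> as ! j \<in> dblock sc H (ssum G0 G1) (ls ! j))"
  then obtain bs where bs: "labelled ls bs" and as: "as = map phi bs"
    using labelled_preimage by blast
  have l: "length bs = Suc n" using bs unfolding labelled_def by simp
  have TT: "formD V0 V1 Bg (hd as) (Md (tl as)) = T bs"
    unfolding as using formD_phi_T[OF l labelled_in_A[OF bs]] .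
  show "let cG = count_list ls 0; cH = count_list ls 1; cS = count_list ls 2;
            T = formD V0 V1 Bg (hd as) (Md (tl as)) in
          (cG = Suc n \<longrightarrow> T = Bg (fst (hd as)) (Mg (map fst (tl as)))) \<and>
          (cH = n \<and> cS = 1 \<and> ls ! 0 = 2 \<longrightarrow> T = snd (snd (hd as)) (M (map (fst \<circ> snd) (tl as)))) \<and>
          (cS = 0 \<and> 1 \<le> cH \<longrightarrow> T = psi cH as) \<and>
          (\<not> (cG = Suc n \<or> cH = n \<and> cS = 1 \<or> cS = 0 \<and> 1 \<le> cH) \<longrightarrow> T = 0)"
    unfolding Let_def TT
  proof (intro conjI impI)
    assume "count_list ls 0 = Suc n"
    then have G: "set bs \<subseteq> G" by (rule labelled_all_G[OF bs])
    then have "fst (hd as) = coords (hd bs)" "map fst (tl as) = map coords (tl bs)"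
      unfolding as using l phi_G by (cases bs; auto)+
    then show "T bs = Bg (fst (hd as)) (Mg (map fst (tl as)))" using T_G[OF l G] by simp
  next
    assume "count_list ls 1 = n \<and> count_list ls 2 = 1 \<and> ls ! 0 = 2"
    then have P: "hd bs \<in> Iperp" and H: "set (tl bs) \<subseteq> H" using labelled_nu[OF bs] by blast+
    have "snd (snd (hd as)) = dual_of (hd bs)" unfolding as using l phi_P[OF P] by (cases bs) auto
    moreover have "map (fst \<circ> snd) (tl as) = tl bs"
    proof -
      have "map (fst \<circ> snd \<circ> phi) (tl bs) = tl bs" using H phi_H by (intro map_idI) (auto simp: subsetD)
      then show ?thesis unfolding as by (simp add: map_tl)
    qed
    moreover have "M (tl bs) \<in> H" using H_closed H l by simp
    ultimately show "T bs = snd (snd (hd as)) (M (map (fst \<circ> snd) (tl as)))"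
      unfolding T_def dual_of_def by simp
  next
    assume c: "count_list ls 2 = 0 \<and> 1 \<le> count_list ls 1"
    show "T bs = psi (count_list ls 1) as"
      using TT T_top_components[OF bs] c unfolding psi_def by (cases "count_list ls 1 < n") simp_all
  next
    assume "\<not> (count_list ls 0 = Suc n \<or> count_list ls 1 = n \<and> count_list ls 2 = 1 \<or>
      count_list ls 2 = 0 \<and> 1 \<le> count_list ls 1)"
    then show "T bs = 0" by (rule T_mixed_components[OF bs])
  qed
qed

lemma super_iso_phi:
  "super_iso sc V0 V1 n B M (scD sc) (dpart sc V0 V1 H G0 G1 False) (dpart sc V0 V1 H G0 G1 True)
     (formD V0 V1 Bg) Md phi"
proof -
  have image: "phi ` V0 = dpart sc V0 V1 H G0 G1 False" "phi ` V1 = dpart sc V0 V1 H G0 G1 True"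
    using phi_par_part[of False] phi_par_part[of True] unfolding par_part_def by simp_all
  have "bij_betw phi A (ssum (dpart sc V0 V1 H G0 G1 False) (dpart sc V0 V1 H G0 G1 True))"
    unfolding bij_betw_def image[symmetric] phi.ssum_image_eq using phi_inj by simp
  moreover have "\<forall>x\<in>A. \<forall>y\<in>A. \<forall>c. phi (x + y) = phi x + phi y \<and> phi (sc c x) = scD sc c (phi x)"
    using phi_add phi_scale by blast
  moreover have "\<forall>x\<in>A. \<forall>y\<in>A. formD V0 V1 Bg (phi x) (phi y) = B x y"
    using phi_isometry by blast
  moreover have "\<forall>as. length as = n \<and> set as \<subseteq> A \<longrightarrow> phi (M as) = Md (map phi as)"
    using Md_phi by simp
  ultimately show ?thesis unfolding super_iso_def image by blast
qed

end

theorem corollary1: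
  fixes sc :: "'k::real_normed_field \<Rightarrow> 'v::ab_group_add \<Rightarrow> 'v"
    and V0 V1 :: "'v set" and n :: nat
    and B :: "'v \<Rightarrow> 'v \<Rightarrow> 'k" and M :: "'v list \<Rightarrow> 'v"
    and I H :: "'v set"
  assumes "vector_space sc"
    and "1 \<le> n"
    and "comm_inv_superalg sc V0 V1 n B M"
    and "irreducible_alg sc V0 V1 n B M"
    and "\<not> simple_alg sc V0 V1 n M"
    and "maximal_nontrivial_ideal sc V0 V1 n M I"
    and "is_subalgebra sc V0 V1 n M H"
    and "isotropic B H"
    and "I \<inter> H = {0}" and "ssum I H = ssum V0 V1"
  shows "\<exists>(G0 :: (nat \<Rightarrow> 'k) set) G1 Bg Mg Md \<psi> \<phi>.
           gen_double_ext sc V0 V1 n M H G0 G1 Bg Mg Md \<psi> \<and>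
           (\<forall>as. \<psi> n as = 0 \<and> \<psi> (Suc n) as = 0) \<and>
           super_iso sc V0 V1 n B M (scD sc) (dpart sc V0 V1 H G0 G1 False)
             (dpart sc V0 V1 H G0 G1 True) (formD V0 V1 Bg) Md \<phi>"
proof -
  interpret double_extension_setting sc V0 V1 n B M I H
    by (intro double_extension_setting.intro comm_inv_algebra.intro comm_inv_algebra_axioms.intro
        double_extension_setting_axioms.intro assms(1-4,6-10))
  have "\<forall>as. psi n as = 0 \<and> psi (Suc n) as = 0" by (simp add: psi_def)
  then show ?thesis using gen_double_ext_phi super_iso_phi by blast
qed

end
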